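(* If an $\mathbf F_{q^2}$-linear $[(n,k,m;\delta,d_f)]_q$ convolutional stabilizer code exists, then there exists an $(n,(n-k)/2,\delta)_{q^2}$ convolutional code $C$ with $C\subseteq C^{\perp_h}$ such that $d_f=\mathrm{wt}(C^{\perp_h}\setminus C)$, the minimum weight of an element of $C^{\perp_h}\setminus C$.
   Context: Classical convolutional codes: An $(n,k,\delta)_q$ convolutional code $C$ is a submodule $\{u(D)G(D)\}$ of $\mathbf F_q[D]^n$ generated by a right-invertible $G(D)\in\mathbf F_q[D]^{k\times n}$ whose row degrees $\nu_i$ sum to $\delta$, the maximal degree of a $k\times k$ minor (the degree); the memory is $\max\nu_i$. The weight of an element of $\mathbf F_q[D]^n$ (or of a finitely supported sequence) is its number of nonzero coefficients. $\Gamma_q$ is the set of finitely supported sequences over $\mathbf F_q$, and $\sigma\colon\mathbf F_q[D]^n\to\Gamma_q$ maps $(u_0,\dots,u_{n-1})$ to the coefficient sequence of $\sum_iD^iu_i(D^n)$; codes are identified with their images. Hermitian inner product on $\Gamma_{q^2}$: $\langle u\mid v\rangle_h=\sum_iu_iv_i^q$; $C^{\perp_h}$ is the Hermitian dual. Quantum setup: $X(a)|x\rangle=|x+a\rangle$, $Z(b)|x\rangle=\omega^{\mathrm{tr}(bx)}|x\rangle$ ($\omega=e^{2\pi i/p}$, $p=\mathrm{char}\,\mathbf F_q$), $I=X(0)$. $P_t$ is the group generated by $((t+1)n+m)$-fold tensor products of the $X(a),Z(b)$, with center $Z_t$; $P_\infty$ is the group of infinite tensor products of such operators with all but finitely many factors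 $I$ (direct limit along $M\mapsto M\otimes I^{\otimes n}$). For abelian $S_0\le P_0$, $S_t=\langle N\otimes I^{\otimes n},I^{\otimes tn}\otimes M: N\in S_{t-1},M\in S_0\rangle$; assume (S1) $I^{\otimes tn}\otimes M$ and $N\otimes I^{\otimes tn}$ commute for $M,N\in S_0$, $t\ge1$; (S2) $\dim_{\mathbf F_q}S_tZ_t/Z_t=(t+1)(n-k)$; (S3) $S_t\cap Z_t$ trivial. The stabilizer is $S=\langle I^{\otimes tn}\otimes M\otimes I^{\otimes\infty}: t\ge0,M\in S_0\rangle\le P_\infty$, and its $+1$-eigenspace is an $[(n,k,m)]_q$ convolutional stabilizer code. The weight of $E\in P_\infty$ is its number of non-identity factors; the free distance is $d_f=\min\{\mathrm{wt}(e): e\in C_{P_\infty}(S)\setminus Z(P_\infty)S\}$ ($C_{P_\infty}(S)$ the centralizer, $Z(P_\infty)$ the center). With a normal basis $(\beta,\beta^q)$ of $\mathbf F_{q^2}/\mathbf F_q$, $\tau(\omega^cX(a_0)Z(b_0)\otimes\cdots)=(\beta a_0+\beta^qb_0,\dots)\in\Gamma_{q^2}$. The code is $\mathbf F_{q^2}$-linear if $\tau(S)$ is an $\mathbf F_{q^2}$-space; its degree $\delta$ is the degree of the classical convolutional code $\sigma^{-1}\tau(S)$. $[(n,k,m;\delta,d_f)]_q$ denotes such a code with degree $\delta$ and free distance $d_f$. *)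

theory Defs
  imports "HOL-Algebra.Generated_Groups" "HOL-Algebra.Coset"
    "HOL-Computational_Algebra.Polynomial"
    "Jordan_Normal_Form.Determinant" "Jordan_Normal_Form.DL_Submatrix"
begin

section \<open>Finite fields: F_{q^2} is the type 'b, F_q and F_p are its subfields\<close>

definition Fq :: "nat \<Rightarrow> 'b::field set" where
  "Fq q = {x. x ^ q = x}"

definition Fp :: "'b::field set" where
  "Fp = {x. x ^ CHAR('b) = x}"

text \<open>Trace from F_q (q = p^r) to the prime field F_p (embedded in 'b).\<close>
definition trq :: "nat \<Rightarrow> 'b::field \<Rightarrow> 'b" where
  "trq q x = (\<Sum>i < (LEAST r. CHAR('b) ^ r = q). x ^ (CHAR('b) ^ i))"

text \<open>An element omega^c X(a) Z(b) (infinite tensor product, all but finitely many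
  factors I) is represented by the triple (c, a, b), with c in the prime field F_p
  (standing for Z_p) and a, b finitely supported sequences over F_q.
  Since Z(b) X(a') = omega^(tr(b a')) X(a') Z(b), the operator product is
  (c,a,b)(c',a',b') = (c + c' + tr(sum_i b_i a'_i), a + a', b + b').\<close>

type_synonym 'b pauli = "'b \<times> (nat \<Rightarrow> 'b) \<times> (nat \<Rightarrow> 'b)"

definition pauli_supp :: "'b::zero pauli \<Rightarrow> nat set" where
  "pauli_supp E = {i. fst (snd E) i \<noteq> 0 \<or> snd (snd E) i \<noteq> 0}"

definition pauli_mult :: "nat \<Rightarrow> 'b::field pauli \<Rightarrow> 'b pauli \<Rightarrow> 'b pauli" where
  "pauli_mult q E F = (case E of (c, a, b) \<Rightarrow> case F of (c', a', b') \<Rightarrow>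
     (c + c' + trq q (\<Sum>i\<in>{i. b i \<noteq> 0}. b i * a' i),
      \<lambda>i. a i + a' i, \<lambda>i. b i + b' i))"

definition pauli_group :: "nat \<Rightarrow> ('b::field pauli) monoid" where
  "pauli_group q = \<lparr> partial_object.carrier = {(c, a, b). c \<in> Fp \<and> (\<forall>i. a i \<in> Fq q \<and> b i \<in> Fq q)
                                   \<and> finite {i. a i \<noteq> 0 \<or> b i \<noteq> 0}},
                     monoid.mult = pauli_mult q,
                     monoid.one = (0, \<lambda>_. 0, \<lambda>_. 0) \<rparr>"

text \<open>P_t viewed inside P_infinity: N-fold tensor products (N = (t+1)n+m), i.e. the
  operators acting as identity outside the first N positions.\<close>
definition pauli_win :: "nat \<Rightarrow> nat \<Rightarrow> ('b::field pauli) monoid" where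
  "pauli_win q N = (pauli_group q)\<lparr> partial_object.carrier := {E \<in> carrier (pauli_group q). pauli_supp E \<subseteq> {..<N}} \<rparr>"

definition center_of :: "('a, 'm) monoid_scheme \<Rightarrow> 'a set" where
  "center_of G = {z \<in> carrier G. \<forall>g \<in> carrier G. z \<otimes>\<^bsub>G\<^esub> g = g \<otimes>\<^bsub>G\<^esub> z}"

definition pshift :: "nat \<Rightarrow> 'b::zero pauli \<Rightarrow> 'b pauli" where
  "pshift s E = (case E of (c, a, b) \<Rightarrow>
     (c, \<lambda>i. if s \<le> i then a (i - s) else 0, \<lambda>i. if s \<le> i then b (i - s) else 0))"

fun stab_t :: "nat \<Rightarrow> nat \<Rightarrow> 'b::field pauli set \<Rightarrow> nat \<Rightarrow> 'b pauli set" where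
  "stab_t q n S0 0 = S0"
| "stab_t q n S0 (Suc t) =
     generate (pauli_group q) (stab_t q n S0 t \<union> pshift (Suc t * n) ` S0)"

definition stab :: "nat \<Rightarrow> nat \<Rightarrow> 'b::field pauli set \<Rightarrow> 'b pauli set" where
  "stab q n S0 = generate (pauli_group q) {pshift (t * n) M | t M. M \<in> S0}"

definition conv_stab_code :: "nat \<Rightarrow> nat \<Rightarrow> nat \<Rightarrow> nat \<Rightarrow> 'b::field pauli set \<Rightarrow> bool" where
  "conv_stab_code q n k m S0 \<longleftrightarrow>
     subgroup S0 (pauli_win q (n + m)) \<and>
     (\<forall>M \<in> S0. \<forall>N \<in> S0. pauli_mult q M N = pauli_mult q N M) \<and>
     (\<forall>t \<ge> 1. \<forall>M \<in> S0. \<forall>N \<in> S0.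
        pauli_mult q (pshift (t * n) M) N = pauli_mult q N (pshift (t * n) M)) \<and>
     (\<forall>t. card ((\<lambda>s. center_of (pauli_win q ((t + 1) * n + m)) #>\<^bsub>pauli_win q ((t + 1) * n + m)\<^esub> s)
                  ` stab_t q n S0 t) = q ^ ((t + 1) * (n - k))) \<and>
     (\<forall>t. stab_t q n S0 t \<inter> center_of (pauli_win q ((t + 1) * n + m))
            = {\<one>\<^bsub>pauli_group q\<^esub>})"

definition pauli_wt :: "'b::zero pauli \<Rightarrow> nat" where
  "pauli_wt E = card (pauli_supp E)"

definition free_distance :: "nat \<Rightarrow> nat \<Rightarrow> 'b::field pauli set \<Rightarrow> nat \<Rightarrow> bool" where
  "free_distance q n S0 d \<longleftrightarrow>
     (let P = pauli_group q; S = stab q n S0;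
          Cent = {e \<in> carrier P. \<forall>s \<in> S. e \<otimes>\<^bsub>P\<^esub> s = s \<otimes>\<^bsub>P\<^esub> e};
          ZS = {z \<otimes>\<^bsub>P\<^esub> s | z s. z \<in> center_of P \<and> s \<in> S};
          A = Cent - ZS
      in d \<in> pauli_wt ` A \<and> (\<forall>e \<in> A. d \<le> pauli_wt e))"

definition tau :: "nat \<Rightarrow> 'b::field \<Rightarrow> 'b pauli \<Rightarrow> (nat \<Rightarrow> 'b)" where
  "tau q \<beta> E = (case E of (c, a, b) \<Rightarrow> \<lambda>i. \<beta> * a i + \<beta> ^ q * b i)"

definition normal_basis :: "nat \<Rightarrow> 'b::field \<Rightarrow> bool" where
  "normal_basis q \<beta> \<longleftrightarrow>
     (\<forall>x \<in> Fq q. \<forall>y \<in> Fq q. x * \<beta> + y * \<beta> ^ q = 0 \<longrightarrow> x = 0 \<and> y = 0)"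

definition Gamma :: "('b::zero \<Rightarrow> bool) \<Rightarrow> (nat \<Rightarrow> 'b) set" where
  "Gamma P = {v. finite {i. v i \<noteq> 0} \<and> (\<forall>i. P (v i))}"

definition is_Fq2_space :: "(nat \<Rightarrow> 'b::field) set \<Rightarrow> bool" where
  "is_Fq2_space T \<longleftrightarrow> T \<subseteq> Gamma (\<lambda>_. True) \<and> (\<lambda>_. 0) \<in> T \<and>
     (\<forall>u \<in> T. \<forall>v \<in> T. (\<lambda>i. u i + v i) \<in> T) \<and> (\<forall>x. \<forall>u \<in> T. (\<lambda>i. x * u i) \<in> T)"

text \<open>sigma: (u_0,...,u_{n-1}) \<mapsto> coefficient sequence of sum_i D^i u_i(D^n).\<close>
definition sigma :: "nat \<Rightarrow> 'b::zero poly vec \<Rightarrow> (nat \<Rightarrow> 'b)" where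
  "sigma n u = (\<lambda>j. coeff (u $ (j mod n)) (j div n))"

definition seq_wt :: "(nat \<Rightarrow> 'b::zero) \<Rightarrow> nat" where
  "seq_wt v = card {i. v i \<noteq> 0}"

definition herm :: "nat \<Rightarrow> (nat \<Rightarrow> 'b::field) \<Rightarrow> (nat \<Rightarrow> 'b) \<Rightarrow> 'b" where
  "herm q u v = (\<Sum>i\<in>{i. u i \<noteq> 0}. u i * v i ^ q)"

definition herm_dual :: "nat \<Rightarrow> (nat \<Rightarrow> 'b::field) set \<Rightarrow> (nat \<Rightarrow> 'b) set" where
  "herm_dual q C = {v \<in> Gamma (\<lambda>_. True). \<forall>u \<in> C. herm q u v = 0}"

definition row_deg :: "'b::zero poly mat \<Rightarrow> nat \<Rightarrow> nat" where
  "row_deg G i = Max {degree (G $$ (i, j)) | j. j < dim_col G}"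

definition conv_code :: "nat \<Rightarrow> nat \<Rightarrow> nat \<Rightarrow> 'b::field poly vec set \<Rightarrow> bool" where
  "conv_code n k \<delta> C \<longleftrightarrow>
     (\<exists>G \<in> carrier_mat k n.
        (\<exists>H \<in> carrier_mat n k. G * H = 1\<^sub>m k) \<and>
        (\<Sum>i<k. row_deg G i) = \<delta> \<and>
        \<delta> = Max {degree (det (submatrix G {..<k} J)) | J. J \<subseteq> {..<n} \<and> card J = k} \<and>
        C = {transpose_mat G *\<^sub>v u | u. u \<in> carrier_vec k})"

end

theory Submission
  imports Defs "HOL-Number_Theory.Cong" "HOL-Algebra.Multiplicative_Group"
begin

text \<open>
  The map \<open>\<tau>\<close> identifies the X/Z parts \<open>(a, b)\<close> of Pauli operators with sequences
  \<open>\<beta> a + \<beta>\<^sup>q b\<close> over \<open>\<bbbF>\<^bsub>q\<^sup>2\<^esub>\<close>. In these coordinates the trace-symplectic form, which decides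
  whether two operators commute, equals \<open>- tr(h/\<gamma> + (h/\<gamma>)\<^sup>q)\<close> for the Hermitian product \<open>h\<close>
  and \<open>\<gamma> = \<beta>\<^sup>2 - \<beta>\<^bsup>2q\<^esup>\<close>. As \<open>\<tau>(S)\<close> is closed under \<open>\<bbbF>\<^bsub>q\<^sup>2\<^esub>\<close>-scaling and the trace is
  nondegenerate, commuting with \<open>S\<close> is the same as being Hermitian orthogonal to \<open>\<tau>(S)\<close>. So
  \<open>\<tau>(S)\<close> is self-orthogonal, \<open>\<tau>\<close> maps the centralizer of \<open>S\<close> modulo phases onto the Hermitian
  dual, and the free distance carries over, as \<open>\<tau>\<close> preserves weights.

  If \<open>\<tau>(S) = \<sigma>(C)\<close> for a code \<open>C\<close> of dimension \<open>k'\<close>, then \<open>2k' = n - k\<close> by counting: the first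
  blocks of \<open>C\<close> take \<open>q\<^bsup>2k'\<^esup>\<close> values but come from \<open>S\<^sub>0\<close>, which has \<open>q\<^bsup>n-k\<^esup>\<close> classes modulo
  phases; conversely the \<open>q\<^bsup>(t+1)(n-k)\<^esup>\<close> classes of \<open>S\<^sub>t\<close> live on the first \<open>t + 1 + m\<close> blocks,
  where \<open>C\<close> has at most \<open>q\<^bsup>2k'(t+1+m)\<^esup>\<close> words, and \<open>t \<rightarrow> \<infinity>\<close> forces equality.
\<close>

hide_const (open) up_ring.coeff up_ring.monom

section \<open>Finite fields\<close>

lemma prime_CHAR_finite: "prime CHAR('a::{finite,field})"
  using prime_CHAR_semidom finite_imp_CHAR_pos[OF finite_UNIV] by blast

lemma one_less_CHAR_finite: "1 < CHAR('a::{finite,field})"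
  using prime_CHAR_finite prime_gt_1_nat by blast

lemma power_card_UNIV_finite_field:
  fixes x :: "'a::{finite,field}"
  shows "x ^ card (UNIV :: 'a set) = x"
proof (cases "x = 0")
  case False
  define G where "G = \<lparr>carrier = UNIV - {0 :: 'a}, monoid.mult = (*), one = 1 :: 'a\<rparr>"
  interpret group G
  proof (rule groupI)
    fix y assume "y \<in> carrier G"
    then show "\<exists>z\<in>carrier G. z \<otimes>\<^bsub>G\<^esub> y = \<one>\<^bsub>G\<^esub>"
      by (intro bexI[of _ "inverse y"]) (auto simp: G_def)
  qed (auto simp: G_def mult.assoc)
  have pow: "y [^]\<^bsub>G\<^esub> (i :: nat) = y ^ i" for y i
    by (induction i) (auto simp: G_def)
  have "x [^]\<^bsub>G\<^esub> Coset.order G = \<one>\<^bsub>G\<^esub>"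
    by (rule pow_order_eq_1) (simp add: G_def False)
  moreover have "Coset.order G = card (UNIV :: 'a set) - 1"
    unfolding Coset.order_def G_def by (simp add: card_Diff_singleton)
  ultimately have "x ^ (card (UNIV :: 'a set) - 1) = 1"
    by (simp add: pow) (simp add: G_def)
  then have "x ^ Suc (card (UNIV :: 'a set) - 1) = x" by simp
  then show ?thesis using finite_UNIV_card_ge_0[where ?'a = 'a] by simp
qed (use finite_UNIV_card_ge_0[where ?'a = 'a] in auto)

lemma of_nat_mult_mem:
  fixes B :: "'a::ring_1 set"
  assumes "0 \<in> B" "\<And>x y. x \<in> B \<Longrightarrow> y \<in> B \<Longrightarrow> x + y \<in> B" "y \<in> B"
  shows "of_nat i * y \<in> B"
  by (induction i) (auto simp: algebra_simps assms)

lemma mem_if_of_nat_mult_mem: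
  fixes B :: "'a::{finite,field} set"
  assumes "0 \<in> B" "\<And>x y. x \<in> B \<Longrightarrow> y \<in> B \<Longrightarrow> x + y \<in> B"
    and "of_nat j * x \<in> B" and "\<not> CHAR('a) dvd j"
  shows "x \<in> B"
proof -
  have "coprime j CHAR('a)"
    using prime_imp_coprime[OF prime_CHAR_finite assms(4)] by (simp add: coprime_commute)
  then obtain i where "[j * i = 1] (mod CHAR('a))"
    using cong_solve_coprime_nat by (metis One_nat_def)
  then have "(of_nat i * of_nat j :: 'a) = 1"
    by (metis mult.commute of_nat_1 of_nat_eq_iff_cong_CHAR of_nat_mult)
  then have "x = of_nat i * (of_nat j * x)" by (simp add: mult.assoc)
  also have "\<dots> \<in> B" by (rule of_nat_mult_mem[OF assms(1,2,3)])
  finally show ?thesis .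
qed

text \<open>\<open>B'\<close> is the disjoint union of the cosets \<open>B + j x\<close>, \<open>j < p\<close>.\<close>
lemma additive_subgroup_extension:
  fixes B :: "'a::{finite,field} set" and x :: 'a
  assumes B0: "0 \<in> B" and B_add: "\<And>x y. x \<in> B \<Longrightarrow> y \<in> B \<Longrightarrow> x + y \<in> B"
    and B_neg: "\<And>x. x \<in> B \<Longrightarrow> - x \<in> B" and x: "x \<notin> B"
  defines "B' \<equiv> (\<lambda>(b, j). b + of_nat j * x) ` (B \<times> {..<CHAR('a)})"
  shows "card B' = CHAR('a) * card B" and "0 \<in> B'"
    and "\<And>u v. u \<in> B' \<Longrightarrow> v \<in> B' \<Longrightarrow> u + v \<in> B'"
    and "\<And>u. u \<in> B' \<Longrightarrow> - u \<in> B'" and "insert x B \<subseteq> B'"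
proof -
  define p where "p = CHAR('a)"
  have p1: "p > 1" unfolding p_def by (rule one_less_CHAR_finite)
  have of_nat_mod: "(of_nat (i mod p) :: 'a) = of_nat i" for i
    unfolding p_def by (simp only: of_nat_eq_iff_cong_CHAR) (simp add: cong_def)
  have B'_iff: "y \<in> B' \<longleftrightarrow> (\<exists>b\<in>B. \<exists>j. y = b + of_nat j * x)" for y
  proof
    assume "\<exists>b\<in>B. \<exists>j. y = b + of_nat j * x"
    then obtain b j where "b \<in> B" "y = b + of_nat (j mod p) * x" by (auto simp: of_nat_mod)
    then show "y \<in> B'" unfolding B'_def p_def using p1 p_def by force
  qed (auto simp: B'_def)
  have no_collision: False
    if "b \<in> B" "b' \<in> B" "j' < j" "j < p" "b + of_nat j * x = b' + of_nat j' * x" for b b' j j'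
  proof -
    have "of_nat (j - j') * x = b' + - b"
      using that(3,5) by (simp add: of_nat_diff algebra_simps)
    then have "of_nat (j - j') * x \<in> B" using B_add[OF that(2) B_neg[OF that(1)]] by simp
    moreover have "\<not> p dvd (j - j')" using that(3,4) by (auto dest: dvd_imp_le)
    ultimately show False using mem_if_of_nat_mult_mem[OF B0 B_add] x p_def by blast
  qed
  have "inj_on (\<lambda>(b, j). b + of_nat j * x) (B \<times> {..<p})"
  proof (rule inj_onI, clarify)
    fix b j b' j' assume a: "b \<in> B" "b' \<in> B" "j < p" "j' < p"
      and eq: "b + of_nat j * x = b' + of_nat j' * x"
    have "j = j'"
    proof (rule ccontr)
      assume "j \<noteq> j'"
      then show False
        using no_collision[OF a(1,2) _ a(3) eq] no_collision[OF a(2,1) _ a(4) eq[symmetric]] by linarith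
    qed
    then show "b = b' \<and> j = j'" using eq by simp
  qed
  then show "card B' = CHAR('a) * card B"
    unfolding B'_def p_def by (simp add: card_image card_cartesian_product)
  show "0 \<in> B'" using B0 by (auto simp: B'_iff intro!: exI[of _ 0])
  show "insert x B \<subseteq> B'"
  proof
    fix y assume "y \<in> insert x B"
    then show "y \<in> B'"
    proof
      assume "y = x"
      then show ?thesis unfolding B'_iff by (intro bexI[of _ 0] exI[of _ 1]) (simp_all add: B0)
    next
      assume "y \<in> B"
      then show ?thesis unfolding B'_iff by (intro bexI[of _ y] exI[of _ 0]) simp_all
    qed
  qed
  show "u + v \<in> B'" if "u \<in> B'" "v \<in> B'" for u v
  proof -
    obtain b j where b: "b \<in> B" "u = b + of_nat j * x" using \<open>u \<in> B'\<close> B'_iff by blast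
    obtain b' j' where b': "b' \<in> B" "v = b' + of_nat j' * x" using \<open>v \<in> B'\<close> B'_iff by blast
    have "u + v = (b + b') + of_nat (j + j') * x" using b b' by (simp add: algebra_simps)
    then show ?thesis using B'_iff B_add[OF b(1) b'(1)] by blast
  qed
  show "- u \<in> B'" if "u \<in> B'" for u
  proof -
    obtain b j where b: "b \<in> B" and u: "u = b + of_nat j * x" using \<open>u \<in> B'\<close> B'_iff by blast
    have "(of_nat ((p - 1) * j) :: 'a) = - of_nat j"
      using p1 by (simp add: of_nat_diff p_def)
    then have "- u = - b + of_nat ((p - 1) * j) * x" by (simp add: u algebra_simps)
    then show ?thesis using B_neg[OF b] B'_iff by blast
  qed
qed

lemma card_finite_field_CHAR_power: "\<exists>r. card (UNIV :: 'a::{finite,field} set) = CHAR('a) ^ r"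
proof -
  have "\<exists>r. card (UNIV :: 'a set) = CHAR('a) ^ r"
    if "0 \<in> B" "\<forall>x\<in>B. \<forall>y\<in>B. x + y \<in> B" "\<forall>x\<in>B. - x \<in> B" "\<exists>r. card B = CHAR('a) ^ r"
    for B :: "'a set"
    using that
  proof (induction "card (UNIV - B)" arbitrary: B rule: less_induct)
    case (less B)
    show ?case
    proof (cases "B = UNIV")
      case False
      then obtain x where x: "x \<notin> B" by auto
      define B' where "B' = (\<lambda>(b, j). b + of_nat j * x) ` (B \<times> {..<CHAR('a)})"
      note ext = additive_subgroup_extension[of B x, folded B'_def]
      have "card (UNIV - B') < card (UNIV - B)"
        by (rule psubset_card_mono) (use ext less.prems x in auto)
      moreover obtain r where "card B = CHAR('a) ^ r" using less.prems by auto
      then have "card B' = CHAR('a) ^ Suc r" using ext less.prems x by simp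
      ultimately show ?thesis using less.hyps[of B'] ext less.prems x by blast
    qed (use less in simp)
  qed
  from this[of "{0}"] show ?thesis by (simp add: exI[of _ 0])
qed

lemma power_CHAR_power_add:
  fixes x y :: "'a::{finite,field}"
  shows "(x + y) ^ (CHAR('a) ^ i) = x ^ (CHAR('a) ^ i) + y ^ (CHAR('a) ^ i)"
  by (rule freshmans_dream'[OF prime_CHAR_finite refl])

lemma power_CHAR_power_neg:
  fixes x :: "'a::{finite,field}"
  shows "(- x) ^ (CHAR('a) ^ i) = - (x ^ (CHAR('a) ^ i))"
proof -
  have "(x + - x) ^ (CHAR('a) ^ i) = 0"
    using one_less_CHAR_finite[where ?'a = 'a] by simp
  then show ?thesis unfolding power_CHAR_power_add by (simp add: eq_neg_iff_add_eq_0 add.commute)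
qed

lemma sum_CHAR_powers_nonzero:
  fixes A :: "'a::{finite,field} set"
  assumes "r \<ge> 1" and "CHAR('a) ^ (r - 1) < card A"
  shows "\<exists>x\<in>A. (\<Sum>i<r. x ^ (CHAR('a) ^ i)) \<noteq> 0"
proof (rule ccontr)
  assume no_root: "\<not> ?thesis"
  define p where "p = CHAR('a)"
  have p1: "p > 1" unfolding p_def by (rule one_less_CHAR_finite)
  define P :: "'a poly" where "P = (\<Sum>i<r. monom 1 (p ^ i))"
  have poly_P: "poly P x = (\<Sum>i<r. x ^ (p ^ i))" for x
    unfolding P_def by (simp add: poly_sum poly_monom)
  have coeff_P: "coeff P j = (\<Sum>i<r. if p ^ i = j then 1 else 0)" for j
    unfolding P_def by (simp add: coeff_sum coeff_monom)
  have "coeff P (p ^ (r - 1)) = (\<Sum>i<r. if i = r - 1 then 1 else 0)"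
    unfolding coeff_P using p1 by (intro sum.cong) (auto simp: power_inject_exp)
  also have "\<dots> = 1" using assms(1) by simp
  finally have "P \<noteq> 0" by auto
  have "degree P \<le> p ^ (r - 1)"
  proof (rule degree_le, intro allI impI)
    fix j assume j: "p ^ (r - 1) < j"
    have "\<And>i. i < r \<Longrightarrow> p ^ i \<le> p ^ (r - 1)" using p1 by (intro power_increasing) auto
    then show "coeff P j = 0" unfolding coeff_P using j by (intro sum.neutral) (auto dest: le_less_trans)
  qed
  moreover have "card A \<le> card {x. poly P x = 0}"
    using no_root by (intro card_mono) (auto simp: poly_P p_def)
  moreover have "card {x. poly P x = 0} \<le> degree P" by (rule card_poly_roots_bound[OF \<open>P \<noteq> 0\<close>])
  ultimately show False using assms(2) p_def by simp
qed

section \<open>The subfield \<open>\<bbbF>\<^sub>q\<close> and its trace\<close>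

locale Fq2_field =
  fixes q :: nat
  assumes card_UNIV: "card (UNIV :: 'b::{finite,field} set) = q ^ 2"
begin

lemma two_le_q: "q \<ge> 2"
proof -
  have "card {0::'b, 1} \<le> card (UNIV :: 'b set)" by (rule card_mono) auto
  then have "2 \<le> q ^ 2" using card_UNIV by simp
  then show ?thesis
    by (metis One_nat_def Suc_1 less_2_cases_iff not_less one_power2 power_zero_numeral zero_less_Suc)
qed

lemma card_UNIV_power: "card (UNIV :: 'b set) ^ j = q ^ (2 * j)"
  using card_UNIV by (simp add: power_mult)

lemma one_less_q: "1 < q"
  using two_le_q by simp

definition q_exp :: nat where
  "q_exp = (LEAST r. CHAR('b) ^ r = q)"

lemma CHAR_power_q_exp: "CHAR('b) ^ q_exp = q"
proof -
  obtain R where "card (UNIV :: 'b set) = CHAR('b) ^ R" using card_finite_field_CHAR_power by blast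
  then have "q dvd CHAR('b) ^ R" using card_UNIV by (metis dvd_triv_left power2_eq_square)
  then have "\<exists>s. CHAR('b) ^ s = q" using divides_primepow_nat[OF prime_CHAR_finite] by metis
  then show ?thesis unfolding q_exp_def by (rule LeastI_ex)
qed

lemma q_exp_pos: "q_exp \<ge> 1"
  using CHAR_power_q_exp two_le_q by (cases q_exp) auto

lemma trq_eq_sum: "trq q (x :: 'b) = (\<Sum>i<q_exp. x ^ (CHAR('b) ^ i))"
  unfolding trq_def q_exp_def ..

lemma power_q_add: "(x + y :: 'b) ^ q = x ^ q + y ^ q"
  using power_CHAR_power_add[of x y q_exp] by (simp add: CHAR_power_q_exp)

lemma power_q_neg: "(- x :: 'b) ^ q = - (x ^ q)"
  using power_CHAR_power_neg[of x q_exp] by (simp add: CHAR_power_q_exp)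

lemma power_q_diff: "(x - y :: 'b) ^ q = x ^ q - y ^ q"
  using power_q_add[of x "- y"] power_q_neg[of y] by simp

lemma power_q_sum: "(sum f A :: 'b) ^ q = (\<Sum>j\<in>A. f j ^ q)"
  by (rule freshmans_dream_sum'[OF prime_CHAR_finite CHAR_power_q_exp[symmetric]])

lemma power_q_q: "((x :: 'b) ^ q) ^ q = x"
  using power_card_UNIV_finite_field[of x] card_UNIV by (simp add: power2_eq_square power_mult)

lemma Fq_zero [simp]: "0 \<in> Fq q" unfolding Fq_def using two_le_q by simp
lemma Fq_one [simp]: "1 \<in> Fq q" unfolding Fq_def by simp
lemma Fq_add [simp]: "x \<in> Fq q \<Longrightarrow> y \<in> Fq q \<Longrightarrow> (x :: 'b) + y \<in> Fq q"
  unfolding Fq_def by (simp add: power_q_add)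
lemma Fq_neg [simp]: "x \<in> Fq q \<Longrightarrow> - (x :: 'b) \<in> Fq q"
  unfolding Fq_def by (simp add: power_q_neg)
lemma Fq_diff [simp]: "x \<in> Fq q \<Longrightarrow> y \<in> Fq q \<Longrightarrow> (x :: 'b) - y \<in> Fq q"
  unfolding Fq_def by (simp add: power_q_diff)
lemma Fq_mult [simp]: "x \<in> Fq q \<Longrightarrow> y \<in> Fq q \<Longrightarrow> (x :: 'b) * y \<in> Fq q"
  unfolding Fq_def by (simp add: power_mult_distrib)
lemma Fq_divide [simp]: "x \<in> Fq q \<Longrightarrow> y \<in> Fq q \<Longrightarrow> (x :: 'b) / y \<in> Fq q"
  unfolding Fq_def by (simp add: power_divide)
lemma Fq_sum: "(\<And>i. i \<in> A \<Longrightarrow> f i \<in> Fq q) \<Longrightarrow> (sum f A :: 'b) \<in> Fq q"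
  by (induction A rule: infinite_finite_induct) auto

lemma Fp_zero [simp]: "(0 :: 'b) \<in> Fp"
  unfolding Fp_def using one_less_CHAR_finite[where ?'a = 'b] by simp
lemma Fp_add [simp]: "x \<in> Fp \<Longrightarrow> y \<in> Fp \<Longrightarrow> (x :: 'b) + y \<in> Fp"
  unfolding Fp_def using power_CHAR_power_add[of x y 1] by simp
lemma Fp_neg [simp]: "x \<in> Fp \<Longrightarrow> - (x :: 'b) \<in> Fp"
  unfolding Fp_def using power_CHAR_power_neg[of x 1] by simp
lemma Fp_diff [simp]: "x \<in> Fp \<Longrightarrow> y \<in> Fp \<Longrightarrow> (x :: 'b) - y \<in> Fp"
  using Fp_add[of x "- y"] Fp_neg[of y] by simp

lemma trq_add: "trq q ((x :: 'b) + y) = trq q x + trq q y"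
  unfolding trq_eq_sum power_CHAR_power_add by (simp add: sum.distrib)
lemma trq_neg: "trq q (- (x :: 'b)) = - trq q x"
  unfolding trq_eq_sum power_CHAR_power_neg by (simp add: sum_negf)
lemma trq_diff: "trq q ((x :: 'b) - y) = trq q x - trq q y"
  using trq_add[of x "- y"] trq_neg[of y] by simp
lemma trq_zero [simp]: "trq q (0 :: 'b) = 0"
  unfolding trq_eq_sum using one_less_CHAR_finite[where ?'a = 'b] by (simp add: power_0_left)

lemma trq_in_Fp:
  assumes "x \<in> Fq q"
  shows "trq q (x :: 'b) \<in> Fp"
proof -
  define f where "f i = x ^ (CHAR('b) ^ i)" for i
  have "(trq q x) ^ CHAR('b) = (\<Sum>i<q_exp. f (Suc i))"
    unfolding trq_eq_sum f_def freshmans_dream_sum[OF prime_CHAR_finite refl]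
    by (simp add: power_mult[symmetric] mult.commute)
  also have "\<dots> = (\<Sum>i<Suc q_exp. f i) - f 0"
    by (simp only: sum.lessThan_Suc_shift) simp
  also have "f q_exp = f 0"
    using assms unfolding f_def Fq_def by (simp add: CHAR_power_q_exp)
  then have "(\<Sum>i<Suc q_exp. f i) - f 0 = (\<Sum>i<q_exp. f i)" by simp
  finally show ?thesis unfolding Fp_def trq_eq_sum f_def by simp
qed

text \<open>With \<open>\<phi> x = x\<^sup>q - x\<close> and a section \<open>h\<close> of \<open>\<phi>\<close>, the map \<open>x \<mapsto> (\<phi> x, x - h (\<phi> x))\<close>
  injects the field into \<open>R \<times> \<bbbF>\<^sub>q\<close>, where \<open>R\<close> is the set of at most \<open>q\<close> roots of \<open>X\<^sup>q + X\<close>.\<close>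
lemma q_le_card_Fq: "q \<le> card (Fq q :: 'b set)"
proof -
  define \<phi> :: "'b \<Rightarrow> 'b" where "\<phi> x = x ^ q - x" for x
  define P :: "'b poly" where "P = monom 1 q + [:0, 1:]"
  define R where "R = {y. poly P y = 0}"
  have "coeff P q = 1" unfolding P_def using two_le_q by (simp add: coeff_monom coeff_pCons split: nat.split)
  then have "P \<noteq> 0" by auto
  have "degree P \<le> q" unfolding P_def using two_le_q
    by (intro degree_le) (auto simp: coeff_monom coeff_pCons split: nat.split)
  then have card_R: "card R \<le> q" using card_poly_roots_bound[OF \<open>P \<noteq> 0\<close>] unfolding R_def by simp
  have \<phi>_R: "\<phi> x \<in> R" for x
  proof -
    have "(\<phi> x) ^ q = x - x ^ q" unfolding \<phi>_def power_q_diff power_q_q ..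
    then show ?thesis unfolding R_def P_def by (simp add: poly_monom \<phi>_def)
  qed
  define h where "h r = (SOME y. \<phi> y = r)" for r
  have h: "\<phi> (h (\<phi> x)) = \<phi> x" for x unfolding h_def by (rule someI_ex) blast
  have inj: "inj (\<lambda>x. (\<phi> x, x - h (\<phi> x)))" by (rule injI) auto
  have "(\<lambda>x. (\<phi> x, x - h (\<phi> x))) ` UNIV \<subseteq> R \<times> Fq q"
  proof clarify
    fix x
    have "(x - h (\<phi> x)) ^ q = x - h (\<phi> x)"
      using h[of x] unfolding power_q_diff \<phi>_def by (simp add: algebra_simps)
    then show "\<phi> x \<in> R \<and> x - h (\<phi> x) \<in> Fq q" using \<phi>_R unfolding Fq_def by simp
  qed
  then have "card ((\<lambda>x. (\<phi> x, x - h (\<phi> x))) ` UNIV) \<le> card (R \<times> (Fq q :: 'b set))"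
    by (intro card_mono) auto
  then have "q * q \<le> card R * card (Fq q :: 'b set)"
    using card_UNIV card_image[OF inj] by (simp add: card_cartesian_product power2_eq_square)
  also have "\<dots> \<le> q * card (Fq q :: 'b set)" using card_R by simp
  finally show ?thesis using two_le_q by simp
qed

lemma trq_nondegenerate:
  assumes "y \<in> Fq q" "y \<noteq> (0 :: 'b)"
  shows "\<exists>x\<in>Fq q. trq q (y * x) \<noteq> 0"
proof -
  have "CHAR('b) ^ (q_exp - 1) < CHAR('b) ^ q_exp"
    using one_less_CHAR_finite[where ?'a = 'b] q_exp_pos by (intro power_strict_increasing) auto
  then have "CHAR('b) ^ (q_exp - 1) < card (Fq q :: 'b set)"
    using CHAR_power_q_exp q_le_card_Fq by simp
  then obtain w :: 'b where "w \<in> Fq q" "trq q w \<noteq> 0"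
    using sum_CHAR_powers_nonzero[OF q_exp_pos] unfolding trq_eq_sum by blast
  then show ?thesis using assms by (intro bexI[of _ "w / y"]) auto
qed

text \<open>\<open>trq q (z + z\<^sup>q)\<close> is the absolute trace of \<open>z\<close>, a polynomial in \<open>z\<close> of degree
  \<open>p\<^bsup>2 q_exp - 1\<^esup> < q\<^sup>2\<close>.\<close>
lemma trq_add_power_q_nonzero: "\<exists>z :: 'b. trq q (z + z ^ q) \<noteq> 0"
proof -
  have trace: "trq q (z + z ^ q) = (\<Sum>i<2 * q_exp. z ^ (CHAR('b) ^ i))" for z :: 'b
  proof -
    define g where "g i = z ^ (CHAR('b) ^ i)" for i
    have "trq q (z ^ q) = (\<Sum>i<q_exp. g (i + q_exp))"
      unfolding trq_eq_sum g_def using CHAR_power_q_exp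
      by (simp add: power_mult[symmetric] power_add mult.commute)
    also have "\<dots> = (\<Sum>i = q_exp..<q_exp + q_exp. g i)"
      using sum.shift_bounds_nat_ivl[of g 0 q_exp q_exp] by (simp add: lessThan_atLeast0)
    finally have "trq q (z + z ^ q) = (\<Sum>i<q_exp. g i) + (\<Sum>i = q_exp..<q_exp + q_exp. g i)"
      unfolding trq_add by (simp add: trq_eq_sum g_def)
    then show ?thesis
      by (simp add: g_def mult_2 lessThan_atLeast0 sum.atLeastLessThan_concat)
  qed
  have "CHAR('b) ^ (2 * q_exp - 1) < CHAR('b) ^ (2 * q_exp)"
    using one_less_CHAR_finite[where ?'a = 'b] q_exp_pos by (intro power_strict_increasing) auto
  also have "\<dots> = card (UNIV :: 'b set)"
    using CHAR_power_q_exp card_UNIV by (metis power_mult power_mult_distrib power2_eq_square)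
  finally obtain z :: 'b where "(\<Sum>i<2 * q_exp. z ^ (CHAR('b) ^ i)) \<noteq> 0"
    using sum_CHAR_powers_nonzero[of "2 * q_exp" UNIV] q_exp_pos by auto
  then show ?thesis using trace by metis
qed

end

section \<open>Pauli operators and the trace-symplectic form\<close>

type_synonym 'b xz = "(nat \<Rightarrow> 'b) \<times> (nat \<Rightarrow> 'b)"

definition xz_space :: "nat \<Rightarrow> 'b::field xz set" where
  "xz_space q = {(a, b). (\<forall>i. a i \<in> Fq q \<and> b i \<in> Fq q) \<and> finite {i. a i \<noteq> 0 \<or> b i \<noteq> 0}}"

definition xz_supp :: "'b::zero xz \<Rightarrow> nat set" where
  "xz_supp x = {i. fst x i \<noteq> 0 \<or> snd x i \<noteq> 0}"

definition xz_add :: "'b::plus xz \<Rightarrow> 'b xz \<Rightarrow> 'b xz" where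
  "xz_add x y = (\<lambda>i. fst x i + fst y i, \<lambda>i. snd x i + snd y i)"

definition xz_neg :: "'b::uminus xz \<Rightarrow> 'b xz" where
  "xz_neg x = (\<lambda>i. - fst x i, \<lambda>i. - snd x i)"

definition seq_shift :: "nat \<Rightarrow> (nat \<Rightarrow> 'b::zero) \<Rightarrow> nat \<Rightarrow> 'b" where
  "seq_shift s f = (\<lambda>i. if s \<le> i then f (i - s) else 0)"

definition xz_shift :: "nat \<Rightarrow> 'b::zero xz \<Rightarrow> 'b xz" where
  "xz_shift s x = (seq_shift s (fst x), seq_shift s (snd x))"

definition single :: "nat \<Rightarrow> 'b::zero \<Rightarrow> nat \<Rightarrow> 'b" where
  "single i x = (\<lambda>j. if j = i then x else 0)"

definition symp_form :: "nat \<Rightarrow> 'b::field xz \<Rightarrow> 'b xz \<Rightarrow> 'b" where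
  "symp_form q x y = trq q (\<Sum>i\<in>{i. snd x i \<noteq> 0}. snd x i * fst y i)
              - trq q (\<Sum>i\<in>{i. snd y i \<noteq> 0}. snd y i * fst x i)"

definition pauli_inv :: "nat \<Rightarrow> 'b::field pauli \<Rightarrow> 'b pauli" where
  "pauli_inv q E = (case E of (c, a, b) \<Rightarrow>
     (- c + trq q (\<Sum>i\<in>{i. b i \<noteq> 0}. b i * a i), \<lambda>i. - a i, \<lambda>i. - b i))"

lemma pauli_mult_Pair: "pauli_mult q (c, a, b) (c', a', b') =
   (c + c' + trq q (\<Sum>i\<in>{i. b i \<noteq> 0}. b i * a' i), \<lambda>i. a i + a' i, \<lambda>i. b i + b' i)"
  unfolding pauli_mult_def by simp

lemma snd_pauli_mult: "snd (pauli_mult q E F) = xz_add (snd E) (snd F)"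
  unfolding pauli_mult_def xz_add_def by (cases E; cases F) simp

lemma pauli_mult_commute_iff: "pauli_mult q E F = pauli_mult q F E \<longleftrightarrow> symp_form q (snd E) (snd F) = 0"
  unfolding pauli_mult_def symp_form_def by (cases E; cases F) (auto simp: add.commute fun_eq_iff)

lemma symp_form_swap: "symp_form q y x = - symp_form q x y"
  unfolding symp_form_def by simp

lemma snd_pauli_inv: "snd (pauli_inv q E) = xz_neg (snd E)"
  unfolding pauli_inv_def xz_neg_def by (cases E) simp

lemma pshift_0 [simp]: "pshift 0 E = E"
  unfolding pshift_def by (cases E) simp

lemma fst_pshift: "fst (pshift s E) = fst E"
  unfolding pshift_def by (cases E) simp

lemma snd_pshift: "snd (pshift s E) = xz_shift s (snd E)"
proof -
  obtain c a b where "E = (c, a, b)" by (cases E) auto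
  then show ?thesis by (simp add: pshift_def xz_shift_def seq_shift_def)
qed

lemma xz_shift_add: "xz_shift (s + s') x = xz_shift s (xz_shift s' x)"
  unfolding xz_shift_def seq_shift_def by (auto simp: fun_eq_iff)

lemma xz_shift_0 [simp]: "xz_shift 0 x = x"
  unfolding xz_shift_def seq_shift_def by simp

lemma xz_supp_add: "xz_supp (xz_add x y) \<subseteq> xz_supp x \<union> xz_supp (y :: 'b::monoid_add xz)"
  unfolding xz_supp_def xz_add_def by auto

lemma xz_supp_neg: "xz_supp (xz_neg (x :: 'b::group_add xz)) = xz_supp x"
  unfolding xz_supp_def xz_neg_def by simp

lemma xz_supp_shift: "xz_supp (xz_shift s x) = (\<lambda>i. i + s) ` xz_supp x"
proof
  show "xz_supp (xz_shift s x) \<subseteq> (\<lambda>i. i + s) ` xz_supp x"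
  proof
    fix j assume j: "j \<in> xz_supp (xz_shift s x)"
    then have "s \<le> j" unfolding xz_supp_def xz_shift_def seq_shift_def by (auto split: if_splits)
    then show "j \<in> (\<lambda>i. i + s) ` xz_supp x" using j
      by (intro rev_image_eqI[of "j - s"]) (auto simp: xz_supp_def xz_shift_def seq_shift_def)
  qed
qed (auto simp: xz_supp_def xz_shift_def seq_shift_def)

lemma pauli_group_carrier_iff: "E \<in> carrier (pauli_group q) \<longleftrightarrow> fst E \<in> Fp \<and> snd E \<in> xz_space q"
  unfolding pauli_group_def xz_space_def by (cases E) auto

lemma pauli_win_carrier_iff:
  "E \<in> carrier (pauli_win q N) \<longleftrightarrow> E \<in> carrier (pauli_group q) \<and> xz_supp (snd E) \<subseteq> {..<N}"
  unfolding pauli_win_def pauli_supp_def xz_supp_def by (cases E) auto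

lemma pauli_group_mult [simp]: "monoid.mult (pauli_group q) = pauli_mult q"
  unfolding pauli_group_def by simp
lemma pauli_win_mult [simp]: "monoid.mult (pauli_win q N) = pauli_mult q"
  unfolding pauli_win_def pauli_group_def by simp
lemma pauli_group_one [simp]: "one (pauli_group q) = (0, \<lambda>_. 0, \<lambda>_. 0)"
  unfolding pauli_group_def by simp
lemma pauli_win_one [simp]: "one (pauli_win q N) = (0, \<lambda>_. 0, \<lambda>_. 0)"
  unfolding pauli_win_def pauli_group_def by simp

lemma phase_commute: "pauli_mult q (c, \<lambda>_. 0, \<lambda>_. 0) E = pauli_mult q E (c, \<lambda>_. 0, \<lambda>_. (0::'b::field))"
  by (cases E) (simp add: pauli_mult_Pair add.commute)

lemma sum_nonzero_eq:
  fixes f g :: "nat \<Rightarrow> 'b::semiring_0"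
  assumes "finite I" "{i. f i \<noteq> 0} \<subseteq> I"
  shows "(\<Sum>i\<in>{i. f i \<noteq> 0}. f i * g i) = (\<Sum>i\<in>I. f i * g i)"
  by (rule sum.mono_neutral_left) (use assms in auto)

context Fq2_field
begin

lemma finite_xz_supp: "(x :: 'b xz) \<in> xz_space q \<Longrightarrow> finite (xz_supp x)"
  unfolding xz_space_def xz_supp_def by auto

lemma xz_space_Fq: "(x :: 'b xz) \<in> xz_space q \<Longrightarrow> fst x i \<in> Fq q \<and> snd x i \<in> Fq q"
  unfolding xz_space_def by auto

lemma xz_zero_closed: "((\<lambda>_. 0), (\<lambda>_. 0 :: 'b)) \<in> xz_space q"
  unfolding xz_space_def by auto

lemma xz_add_closed: "(x :: 'b xz) \<in> xz_space q \<Longrightarrow> y \<in> xz_space q \<Longrightarrow> xz_add x y \<in> xz_space q"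
  using finite_subset[OF xz_supp_add[of x y]] unfolding xz_space_def xz_supp_def xz_add_def
  by (cases x; cases y) auto

lemma xz_neg_closed: "(x :: 'b xz) \<in> xz_space q \<Longrightarrow> xz_neg x \<in> xz_space q"
  unfolding xz_space_def xz_neg_def by (cases x) auto

lemma xz_shift_closed:
  assumes "(x :: 'b xz) \<in> xz_space q"
  shows "xz_shift s x \<in> xz_space q"
proof -
  have "finite (xz_supp (xz_shift s x))" unfolding xz_supp_shift using finite_xz_supp[OF assms] by simp
  moreover have "fst (xz_shift s x) i \<in> Fq q \<and> snd (xz_shift s x) i \<in> Fq q" for i
    using xz_space_Fq[OF assms] unfolding xz_shift_def seq_shift_def by auto
  ultimately show ?thesis unfolding xz_space_def xz_supp_def by (cases "xz_shift s x") auto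
qed

lemma pauli_mult_closed:
  assumes "(E :: 'b pauli) \<in> carrier (pauli_group q)" "F \<in> carrier (pauli_group q)"
  shows "pauli_mult q E F \<in> carrier (pauli_group q)"
proof -
  obtain c a b c' a' b' where E: "E = (c, a, b)" and F: "F = (c', a', b')" by (cases E; cases F) auto
  have "(\<Sum>i\<in>{i. b i \<noteq> 0}. b i * a' i) \<in> Fq q"
    using assms unfolding E F pauli_group_carrier_iff xz_space_def by (auto intro!: Fq_sum)
  then show ?thesis
    using assms trq_in_Fp xz_add_closed snd_pauli_mult[of q E F]
    unfolding pauli_group_carrier_iff by (auto simp: E F pauli_mult_Pair)
qed

lemma pauli_inv_closed:
  assumes "(E :: 'b pauli) \<in> carrier (pauli_group q)"
  shows "pauli_inv q E \<in> carrier (pauli_group q)"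
proof -
  obtain c a b where E: "E = (c, a, b)" by (cases E) auto
  have "(\<Sum>i\<in>{i. b i \<noteq> 0}. b i * a i) \<in> Fq q"
    using assms unfolding E pauli_group_carrier_iff xz_space_def by (auto intro!: Fq_sum)
  then show ?thesis
    using assms trq_in_Fp xz_neg_closed snd_pauli_inv[of q E]
    unfolding pauli_group_carrier_iff by (auto simp: E pauli_inv_def)
qed

lemma pauli_mult_inv:
  "pauli_mult q (E :: 'b pauli) (pauli_inv q E) = (0, \<lambda>_. 0, \<lambda>_. 0)"
  "pauli_mult q (pauli_inv q E) E = (0, \<lambda>_. 0, \<lambda>_. 0)"
  by (cases E; simp add: pauli_inv_def pauli_mult_Pair sum_negf trq_neg)+

lemma pauli_inv_unique:
  assumes "pauli_mult q (E :: 'b pauli) F = (0, \<lambda>_. 0, \<lambda>_. 0)"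
  shows "F = pauli_inv q E"
proof -
  obtain c a b c' a' b' where E: "E = (c, a, b)" and F: "F = (c', a', b')" by (cases E; cases F) auto
  from assms have a': "a' = (\<lambda>i. - a i)" and b': "b' = (\<lambda>i. - b i)"
    unfolding E F pauli_mult_Pair by (auto simp: fun_eq_iff eq_neg_iff_add_eq_0 add.commute)
  from assms have "c + c' + trq q (\<Sum>i\<in>{i. b i \<noteq> 0}. b i * a' i) = 0"
    unfolding E F pauli_mult_Pair by simp
  then have "c' = - c + trq q (\<Sum>i\<in>{i. b i \<noteq> 0}. b i * a i)"
    unfolding a' by (simp add: sum_negf trq_neg algebra_simps eq_neg_iff_add_eq_0)
  then show ?thesis unfolding E F pauli_inv_def a' b' by simp
qed

lemma m_inv_pauli_group:
  "(E :: 'b pauli) \<in> carrier (pauli_group q) \<Longrightarrow> inv\<^bsub>pauli_group q\<^esub> E = pauli_inv q E"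
  unfolding m_inv_def using pauli_inv_closed pauli_mult_inv pauli_inv_unique
  by (intro the_equality) auto

lemma m_inv_pauli_win:
  "(E :: 'b pauli) \<in> carrier (pauli_win q N) \<Longrightarrow> inv\<^bsub>pauli_win q N\<^esub> E = pauli_inv q E"
  unfolding m_inv_def using pauli_inv_closed pauli_mult_inv pauli_inv_unique
  by (intro the_equality) (auto simp: pauli_win_carrier_iff snd_pauli_inv xz_supp_neg)

lemma generate_pauli_group_induct:
  assumes H: "H \<subseteq> carrier (pauli_group q :: 'b pauli monoid)"
    and V: "((\<lambda>_. 0), (\<lambda>_. 0)) \<in> V" "\<And>x y. x \<in> V \<Longrightarrow> y \<in> V \<Longrightarrow> xz_add x y \<in> V"
      "\<And>x. x \<in> V \<Longrightarrow> xz_neg x \<in> V"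
    and HV: "\<And>h. h \<in> H \<Longrightarrow> snd h \<in> V"
    and E: "E \<in> generate (pauli_group q) H"
  shows "E \<in> carrier (pauli_group q) \<and> snd E \<in> V"
  using E
proof (induction rule: generate.induct)
  case one
  then show ?case using V xz_zero_closed Fp_zero unfolding pauli_group_carrier_iff by simp
next
  case (incl h)
  then show ?case using H HV by auto
next
  case (inv h)
  then have "h \<in> carrier (pauli_group q)" using H by auto
  then show ?case
    using m_inv_pauli_group pauli_inv_closed V(3)[OF HV[OF inv]] by (simp add: snd_pauli_inv)
next
  case (eng h1 h2)
  then show ?case using pauli_mult_closed V(2) by (simp add: snd_pauli_mult)
qed

lemma symp_form_eq_sum:
  assumes "finite I" "xz_supp x \<subseteq> I" "xz_supp y \<subseteq> I"
  shows "symp_form q x y = trq q (\<Sum>i\<in>I. snd x i * fst y i - snd y i * fst (x :: 'b xz) i)"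
proof -
  have "(\<Sum>i\<in>{i. snd x i \<noteq> 0}. snd x i * fst y i) = (\<Sum>i\<in>I. snd x i * fst y i)"
    "(\<Sum>i\<in>{i. snd y i \<noteq> 0}. snd y i * fst x i) = (\<Sum>i\<in>I. snd y i * fst x i)"
    by (rule sum_nonzero_eq; use assms in \<open>auto simp: xz_supp_def\<close>)+
  then show ?thesis unfolding symp_form_def by (simp add: trq_diff sum_subtractf)
qed

lemma symp_form_add_left:
  assumes "x \<in> xz_space q" "x' \<in> xz_space q" "y \<in> xz_space q"
  shows "symp_form q (xz_add x x') y = symp_form q x y + symp_form q x' (y :: 'b xz)"
proof -
  define I where "I = xz_supp x \<union> xz_supp x' \<union> xz_supp y"
  have I: "finite I" unfolding I_def using assms finite_xz_supp by auto
  have "symp_form q (xz_add x x') y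
      = trq q (\<Sum>i\<in>I. snd (xz_add x x') i * fst y i - snd y i * fst (xz_add x x') i)"
    by (rule symp_form_eq_sum[OF I]) (use xz_supp_add[of x x'] in \<open>auto simp: I_def\<close>)
  also have "\<dots> = trq q ((\<Sum>i\<in>I. snd x i * fst y i - snd y i * fst x i)
                       + (\<Sum>i\<in>I. snd x' i * fst y i - snd y i * fst x' i))"
    unfolding xz_add_def by (simp add: sum.distrib[symmetric] algebra_simps)
  also have "\<dots> = symp_form q x y + symp_form q x' y"
    unfolding trq_add by (subst (1 2) symp_form_eq_sum[OF I]) (auto simp: I_def)
  finally show ?thesis .
qed

lemma symp_form_neg_left: "symp_form q (xz_neg x) y = - symp_form q x (y :: 'b xz)"
  unfolding symp_form_def xz_neg_def by (simp add: sum_negf trq_neg)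

lemma symp_form_zero_left: "symp_form q ((\<lambda>_. 0), (\<lambda>_. 0)) (y :: 'b xz) = 0"
  unfolding symp_form_def by simp

lemma symp_form_shift:
  assumes "x \<in> xz_space q" "y \<in> xz_space q"
  shows "symp_form q (xz_shift s x) (xz_shift s y) = symp_form q x (y :: 'b xz)"
proof -
  define I where "I = xz_supp x \<union> xz_supp y"
  have I: "finite I" unfolding I_def using assms finite_xz_supp by auto
  have "symp_form q (xz_shift s x) (xz_shift s y) = trq q (\<Sum>i\<in>(\<lambda>i. i + s) ` I.
      snd (xz_shift s x) i * fst (xz_shift s y) i - snd (xz_shift s y) i * fst (xz_shift s x) i)"
    by (rule symp_form_eq_sum) (use I in \<open>auto simp: I_def xz_supp_shift\<close>)
  also have "\<dots> = trq q (\<Sum>i\<in>I. snd x i * fst y i - snd y i * fst x i)"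
    by (subst sum.reindex) (auto simp: inj_on_def xz_shift_def seq_shift_def)
  also have "\<dots> = symp_form q x y" by (rule symp_form_eq_sum[symmetric]) (use I in \<open>auto simp: I_def\<close>)
  finally show ?thesis .
qed

lemma pshift_closed: "(E :: 'b pauli) \<in> carrier (pauli_group q) \<Longrightarrow> pshift s E \<in> carrier (pauli_group q)"
  unfolding pauli_group_carrier_iff snd_pshift fst_pshift using xz_shift_closed by auto

lemma symp_form_single_X:
  assumes "(a, b) \<in> xz_space q"
  shows "symp_form q (a, b) (single i x, \<lambda>_. 0) = trq q (b i * (x :: 'b))"
proof -
  have "{j. b j \<noteq> 0} \<subseteq> xz_supp (a, b)" by (auto simp: xz_supp_def)
  then have "finite {j. b j \<noteq> 0}" using finite_xz_supp[OF assms] by (rule finite_subset)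
  then show ?thesis unfolding symp_form_def single_def by (simp add: if_distrib cong: if_cong)
qed

lemma symp_form_single_Z:
  assumes "(a, b) \<in> xz_space q"
  shows "symp_form q (a, b) (\<lambda>_. 0, single i x) = - trq q (a i * (x :: 'b))"
proof -
  have "symp_form q (a, b) (\<lambda>_. 0, single i x) = - trq q (\<Sum>j\<in>{j. single i x j \<noteq> 0}. single i x j * a j)"
    unfolding symp_form_def by simp
  also have "(\<Sum>j\<in>{j. single i x j \<noteq> 0}. single i x j * a j) = a i * x"
    unfolding single_def by (cases "x = 0") (simp_all add: if_distrib mult.commute cong: if_cong)
  finally show ?thesis .
qed

lemma xz_zero_if_commutes_with_singles:
  assumes E: "(E :: 'b pauli) \<in> carrier (pauli_group q)"
    and X: "\<And>x. x \<in> Fq q \<Longrightarrow> pauli_mult q E (0, single i x, \<lambda>_. 0) = pauli_mult q (0, single i x, \<lambda>_. 0) E"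
    and Z: "\<And>x. x \<in> Fq q \<Longrightarrow> pauli_mult q E (0, \<lambda>_. 0, single i x) = pauli_mult q (0, \<lambda>_. 0, single i x) E"
  shows "fst (snd E) i = 0 \<and> snd (snd E) i = 0"
proof -
  obtain c a b where c_a_b: "E = (c, a, b)" by (cases E) auto
  have ab: "(a, b) \<in> xz_space q" using E unfolding c_a_b pauli_group_carrier_iff by simp
  have "b i = 0"
  proof (rule ccontr)
    assume "b i \<noteq> 0"
    moreover have "b i \<in> Fq q" using xz_space_Fq[OF ab, of i] by simp
    ultimately obtain x where "x \<in> Fq q" "trq q (b i * x) \<noteq> 0"
      using trq_nondegenerate by blast
    then show False using X[of x] symp_form_single_X[OF ab, of i x] unfolding pauli_mult_commute_iff c_a_b by simp
  qed
  moreover have "a i = 0"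
  proof (rule ccontr)
    assume "a i \<noteq> 0"
    moreover have "a i \<in> Fq q" using xz_space_Fq[OF ab, of i] by simp
    ultimately obtain x where "x \<in> Fq q" "trq q (a i * x) \<noteq> 0"
      using trq_nondegenerate by blast
    then show False using Z[of x] symp_form_single_Z[OF ab, of i x] unfolding pauli_mult_commute_iff c_a_b by simp
  qed
  ultimately show ?thesis by (simp add: c_a_b)
qed

lemma single_in_pauli_win:
  assumes "x \<in> Fq q" "i < N"
  shows "(0, single i x, \<lambda>_. 0) \<in> carrier (pauli_win q N :: 'b pauli monoid)"
    and "(0, \<lambda>_. 0, single i x) \<in> carrier (pauli_win q N :: 'b pauli monoid)"
  using assms unfolding pauli_win_carrier_iff pauli_group_carrier_iff xz_space_def xz_supp_def single_def
  by (auto intro: finite_subset[of _ "{i}"])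

lemma center_pauli_win: "center_of (pauli_win q N) = (\<lambda>c. (c, \<lambda>_. 0, \<lambda>_. 0 :: 'b)) ` Fp"
proof
  show "center_of (pauli_win q N) \<subseteq> (\<lambda>c. (c, \<lambda>_. 0, \<lambda>_. 0 :: 'b)) ` Fp"
  proof
    fix E :: "'b pauli" assume center: "E \<in> center_of (pauli_win q N)"
    then have E: "E \<in> carrier (pauli_group q)" "xz_supp (snd E) \<subseteq> {..<N}"
      unfolding center_of_def pauli_win_carrier_iff by auto
    have "fst (snd E) i = 0 \<and> snd (snd E) i = 0" for i
    proof (cases "i < N")
      case True
      then show ?thesis using center single_in_pauli_win
        by (intro xz_zero_if_commutes_with_singles[OF E(1)]) (auto simp: center_of_def)
    next
      case False
      then show ?thesis using E(2) unfolding xz_supp_def by auto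
    qed
    moreover have "fst E \<in> Fp" using E(1) unfolding pauli_group_carrier_iff by blast
    ultimately show "E \<in> (\<lambda>c. (c, \<lambda>_. 0, \<lambda>_. 0 :: 'b)) ` Fp"
      by (intro rev_image_eqI[of "fst E"]) (auto simp: fun_eq_iff prod_eq_iff)
  qed
  show "(\<lambda>c. (c, \<lambda>_. 0, \<lambda>_. 0 :: 'b)) ` Fp \<subseteq> center_of (pauli_win q N)"
    unfolding center_of_def using phase_commute xz_zero_closed
    by (auto simp: pauli_win_carrier_iff pauli_group_carrier_iff xz_supp_def)
qed

lemma center_pauli_group: "center_of (pauli_group q) = (\<lambda>c. (c, \<lambda>_. 0, \<lambda>_. 0 :: 'b)) ` Fp"
proof
  show "center_of (pauli_group q) \<subseteq> (\<lambda>c. (c, \<lambda>_. 0, \<lambda>_. 0 :: 'b)) ` Fp"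
  proof
    fix E :: "'b pauli" assume center: "E \<in> center_of (pauli_group q)"
    then have E: "E \<in> carrier (pauli_group q)" unfolding center_of_def by simp
    have "fst (snd E) i = 0 \<and> snd (snd E) i = 0" for i
      using center single_in_pauli_win[of _ i "Suc i"]
      by (intro xz_zero_if_commutes_with_singles[OF E]) (auto simp: center_of_def pauli_win_carrier_iff)
    moreover have "fst E \<in> Fp" using E unfolding pauli_group_carrier_iff by blast
    ultimately show "E \<in> (\<lambda>c. (c, \<lambda>_. 0, \<lambda>_. 0 :: 'b)) ` Fp"
      by (intro rev_image_eqI[of "fst E"]) (auto simp: fun_eq_iff prod_eq_iff)
  qed
  show "(\<lambda>c. (c, \<lambda>_. 0, \<lambda>_. 0 :: 'b)) ` Fp \<subseteq> center_of (pauli_group q)"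
    unfolding center_of_def using phase_commute xz_zero_closed by (auto simp: pauli_group_carrier_iff)
qed

lemma r_coset_center_pauli_win:
  assumes "fst (E :: 'b pauli) \<in> Fp"
  shows "center_of (pauli_win q N) #>\<^bsub>pauli_win q N\<^esub> E = (\<lambda>c. (c, snd E)) ` Fp"
proof -
  obtain c a b where E: "E = (c, a, b)" by (cases E) auto
  have "center_of (pauli_win q N) #>\<^bsub>pauli_win q N\<^esub> E = (\<lambda>c'. (c' + c, a, b)) ` Fp"
    unfolding center_pauli_win r_coset_def E by (auto simp: pauli_mult_Pair)
  also have "\<dots> = (\<lambda>c'. (c', a, b)) ` Fp"
  proof
    show "(\<lambda>c'. (c', a, b)) ` Fp \<subseteq> (\<lambda>c'. (c' + c, a, b)) ` Fp"
      using assms by (auto simp: E intro!: rev_image_eqI[of "_ - c"])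
  qed (use assms E in auto)
  finally show ?thesis by (simp add: E)
qed

lemma card_center_cosets:
  assumes "X \<subseteq> carrier (pauli_win q N :: 'b pauli monoid)"
  shows "card ((\<lambda>E. center_of (pauli_win q N) #>\<^bsub>pauli_win q N\<^esub> E) ` X) = card (snd ` X)"
proof -
  define F where "F x = (\<lambda>c. (c, x)) ` (Fp :: 'b set)" for x :: "'b xz"
  have "center_of (pauli_win q N) #>\<^bsub>pauli_win q N\<^esub> E = F (snd E)" if "E \<in> X" for E
  proof -
    have "fst E \<in> Fp" using assms that by (auto simp: pauli_win_carrier_iff pauli_group_carrier_iff)
    then show ?thesis unfolding F_def by (rule r_coset_center_pauli_win)
  qed
  then have "(\<lambda>E. center_of (pauli_win q N) #>\<^bsub>pauli_win q N\<^esub> E) ` X = F ` snd ` X"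
    by (simp add: image_image cong: image_cong)
  moreover have "inj_on F (snd ` X)"
  proof (rule inj_onI)
    fix x y assume "F x = F y"
    moreover have "(0, x) \<in> F x" unfolding F_def by simp
    ultimately show "x = y" unfolding F_def by auto
  qed
  ultimately show ?thesis by (simp add: card_image)
qed

lemma symp_form_zero_generate:
  assumes H: "H \<subseteq> carrier (pauli_group q :: 'b pauli monoid)" and y: "y \<in> xz_space q"
    and orth: "\<And>h. h \<in> H \<Longrightarrow> symp_form q (snd h) y = 0"
    and E: "E \<in> generate (pauli_group q) H"
  shows "symp_form q (snd E) y = 0"
proof -
  have "snd E \<in> {x \<in> xz_space q. symp_form q x y = 0}"
  proof (rule conjunct2[OF generate_pauli_group_induct[OF H _ _ _ _ E]])
    show "h \<in> H \<Longrightarrow> snd h \<in> {x \<in> xz_space q. symp_form q x y = 0}" for h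
      using H orth pauli_group_carrier_iff by blast
  qed (use xz_zero_closed symp_form_zero_left xz_add_closed symp_form_add_left[OF _ _ y] xz_neg_closed symp_form_neg_left
       in auto)
  then show ?thesis by simp
qed

lemma generate_xz_neg:
  assumes H: "H \<subseteq> carrier (pauli_group q :: 'b pauli monoid)" and E: "E \<in> generate (pauli_group q) H"
  shows "\<exists>E' \<in> generate (pauli_group q) H. snd E' = xz_neg (snd E)"
  using E
proof (induction rule: generate.induct)
  case one
  show ?case by (intro bexI[OF _ generate.one]) (simp add: xz_neg_def)
next
  case (incl h)
  then have "inv\<^bsub>pauli_group q\<^esub> h = pauli_inv q h" using H m_inv_pauli_group by blast
  then show ?case using generate.inv[OF incl] by (metis snd_pauli_inv)
next
  case (inv h)
  then have "inv\<^bsub>pauli_group q\<^esub> h = pauli_inv q h" using H m_inv_pauli_group by blast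
  then show ?case using generate.incl[OF inv]
    by (intro bexI[of _ h]) (simp_all add: snd_pauli_inv xz_neg_def)
next
  case (eng E1 E2)
  then obtain E1' E2' where "E1' \<in> generate (pauli_group q) H" "snd E1' = xz_neg (snd E1)"
    "E2' \<in> generate (pauli_group q) H" "snd E2' = xz_neg (snd E2)" by blast
  moreover from this have "pauli_mult q E1' E2' \<in> generate (pauli_group q) H"
    using generate.eng[of E1' "pauli_group q" H E2'] by simp
  ultimately show ?case
    by (intro bexI[of _ "pauli_mult q E1' E2'"]) (auto simp: snd_pauli_mult xz_neg_def xz_add_def)
qed

end

section \<open>The Hermitian form in normal-basis coordinates\<close>

definition tau_xz :: "nat \<Rightarrow> 'b::field \<Rightarrow> 'b xz \<Rightarrow> nat \<Rightarrow> 'b" where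
  "tau_xz q \<beta> x = (\<lambda>i. \<beta> * fst x i + \<beta> ^ q * snd x i)"

lemma tau_eq_tau_xz: "tau q \<beta> E = tau_xz q \<beta> (snd E)"
  unfolding tau_def tau_xz_def by (cases E) auto

lemma herm_eq_sum:
  assumes "finite I" "{i. u i \<noteq> 0} \<subseteq> I"
  shows "herm q u v = (\<Sum>i\<in>I. u i * v i ^ q)"
  unfolding herm_def by (rule sum_nonzero_eq[OF assms])

lemma herm_scale_left:
  assumes "finite {i. u i \<noteq> 0}"
  shows "herm q (\<lambda>i. c * u i) v = c * herm q u v"
proof -
  have "herm q (\<lambda>i. c * u i) v = (\<Sum>i\<in>{i. u i \<noteq> 0}. c * u i * v i ^ q)"
    by (rule herm_eq_sum) (use assms in auto)
  then show ?thesis unfolding herm_def by (simp add: sum_distrib_left mult.assoc)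
qed

locale normal_basis_field = Fq2_field q for q +
  fixes \<beta> :: "'b::{finite,field}"
  assumes normal_basis_\<beta>: "normal_basis q \<beta>"
begin

lemma normal_basis_coords_inj:
  assumes "a \<in> Fq q" "b \<in> Fq q" "a' \<in> Fq q" "b' \<in> Fq q"
    and "\<beta> * a + \<beta> ^ q * b = \<beta> * a' + \<beta> ^ q * b'"
  shows "a = a' \<and> b = b'"
proof -
  have "(a - a') * \<beta> + (b - b') * \<beta> ^ q = 0" using assms(5) by (simp add: algebra_simps)
  then have "a - a' = 0 \<and> b - b' = 0"
    using normal_basis_\<beta> assms(1-4) unfolding normal_basis_def by (meson Fq_diff)
  then show ?thesis by simp
qed

lemma normal_basis_coords_zero:
  assumes "a \<in> Fq q" "b \<in> Fq q"
  shows "\<beta> * a + \<beta> ^ q * b = 0 \<longleftrightarrow> a = 0 \<and> b = 0"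
  using normal_basis_coords_inj[OF assms Fq_zero Fq_zero] by auto

lemma normal_basis_coords_exist: "\<exists>a b. a \<in> Fq q \<and> b \<in> Fq q \<and> v = \<beta> * a + \<beta> ^ q * b"
proof -
  define f where "f = (\<lambda>(a, b). \<beta> * a + \<beta> ^ q * b)"
  have "inj_on f (Fq q \<times> Fq q)"
  proof (rule inj_onI)
    fix p p' assume "p \<in> Fq q \<times> Fq q" "p' \<in> Fq q \<times> Fq q" "f p = f p'"
    then show "p = p'" using normal_basis_coords_inj[of "fst p" "snd p" "fst p'" "snd p'"]
      by (auto simp: f_def split: prod.splits)
  qed
  then have "card (Fq q \<times> Fq q :: ('b \<times> 'b) set) = card (f ` (Fq q \<times> Fq q))"
    by (simp add: card_image)
  moreover have "card (UNIV :: 'b set) \<le> card (Fq q \<times> Fq q :: ('b \<times> 'b) set)"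
    using card_UNIV q_le_card_Fq by (simp add: card_cartesian_product power2_eq_square mult_le_mono)
  ultimately have "f ` (Fq q \<times> Fq q) = UNIV"
    by (intro card_seteq) auto
  then have "v \<in> f ` (Fq q \<times> Fq q)" by simp
  then show ?thesis unfolding f_def by auto
qed

lemma tau_xz_inj:
  assumes "x \<in> xz_space q" "y \<in> xz_space q" "tau_xz q \<beta> x = tau_xz q \<beta> y"
  shows "x = y"
proof -
  have "fst x i = fst y i \<and> snd x i = snd y i" for i
    using normal_basis_coords_inj[of "fst x i" "snd x i" "fst y i" "snd y i"]
      xz_space_Fq[OF assms(1)] xz_space_Fq[OF assms(2)] fun_cong[OF assms(3), of i]
    unfolding tau_xz_def by auto
  then show ?thesis by (simp add: prod_eq_iff fun_eq_iff)
qed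

lemma supp_tau_xz: "x \<in> xz_space q \<Longrightarrow> {i. tau_xz q \<beta> x i \<noteq> 0} = xz_supp x"
  unfolding tau_xz_def xz_supp_def using normal_basis_coords_zero xz_space_Fq by blast

definition \<gamma> :: 'b where
  "\<gamma> = \<beta> * \<beta> - \<beta> ^ q * \<beta> ^ q"

lemma \<gamma>_nonzero: "\<gamma> \<noteq> 0"
proof -
  have "\<beta> - \<beta> ^ q \<noteq> 0" "\<beta> + \<beta> ^ q \<noteq> 0"
    using normal_basis_coords_zero[of 1 "- 1"] normal_basis_coords_zero[of 1 1] by simp_all
  moreover have "\<gamma> = (\<beta> - \<beta> ^ q) * (\<beta> + \<beta> ^ q)" unfolding \<gamma>_def by (simp add: algebra_simps)
  ultimately show ?thesis by simp
qed

lemma \<gamma>_power_q: "\<gamma> ^ q = - \<gamma>"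
  unfolding \<gamma>_def power_q_diff power_mult_distrib power_q_q by simp

lemma herm_term_antisym:
  assumes "a \<in> Fq q" "b \<in> Fq q" "a' \<in> Fq q" "b' \<in> Fq q"
  shows "(\<beta> * a + \<beta> ^ q * b) * (\<beta> * a' + \<beta> ^ q * b') ^ q
       - (\<beta> * a + \<beta> ^ q * b) ^ q * (\<beta> * a' + \<beta> ^ q * b') = \<gamma> * (a * b' - b * a')"
proof -
  have "a ^ q = a" "b ^ q = b" "a' ^ q = a'" "b' ^ q = b'" using assms unfolding Fq_def by auto
  then have "(\<beta> * a' + \<beta> ^ q * b') ^ q = \<beta> ^ q * a' + \<beta> * b'"
    "(\<beta> * a + \<beta> ^ q * b) ^ q = \<beta> ^ q * a + \<beta> * b"
    unfolding power_q_add power_mult_distrib power_q_q by simp_all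
  then show ?thesis unfolding \<gamma>_def by (simp add: algebra_simps)
qed

lemma symp_form_eq_trq_herm:
  assumes x: "x \<in> xz_space q" and y: "y \<in> xz_space q"
  defines "h \<equiv> herm q (tau_xz q \<beta> x) (tau_xz q \<beta> y)"
  shows "symp_form q x y = - trq q (h / \<gamma> + (h / \<gamma>) ^ q)"
proof -
  define I where "I = xz_supp x \<union> xz_supp y"
  have I: "finite I" unfolding I_def using x y finite_xz_supp by auto
  define u where "u = tau_xz q \<beta> x"
  define v where "v = tau_xz q \<beta> y"
  have h: "h = (\<Sum>i\<in>I. u i * v i ^ q)" unfolding h_def u_def v_def
    by (rule herm_eq_sum[OF I]) (use supp_tau_xz[OF x] in \<open>auto simp: I_def\<close>)
  have h_q: "h ^ q = (\<Sum>i\<in>I. u i ^ q * v i)"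
    unfolding h power_q_sum power_mult_distrib power_q_q ..
  then have h_q: "h - h ^ q = (\<Sum>i\<in>I. u i * v i ^ q) - (\<Sum>i\<in>I. u i ^ q * v i)"
    using h by simp
  have "u i * v i ^ q - u i ^ q * v i = \<gamma> * (fst x i * snd y i - snd x i * fst y i)" for i
    unfolding u_def v_def tau_xz_def using xz_space_Fq[OF x] xz_space_Fq[OF y]
    by (intro herm_term_antisym) auto
  then have "(u i * v i ^ q - u i ^ q * v i) / \<gamma> = fst x i * snd y i - snd x i * fst y i" for i
    using \<gamma>_nonzero by simp
  then have "snd x i * fst y i - snd y i * fst x i = - ((u i * v i ^ q - u i ^ q * v i) / \<gamma>)" for i
    by (metis minus_diff_eq mult.commute)
  then have "(\<Sum>i\<in>I. snd x i * fst y i - snd y i * fst x i) = - (\<Sum>i\<in>I. (u i * v i ^ q - u i ^ q * v i) / \<gamma>)"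
    by (simp add: sum_negf)
  also have "\<dots> = - ((h - h ^ q) / \<gamma>)"
    unfolding h_q by (simp add: diff_divide_distrib sum_divide_distrib sum_subtractf)
  also have "\<dots> = - (h / \<gamma> + (h / \<gamma>) ^ q)"
    by (simp add: power_divide \<gamma>_power_q diff_divide_distrib)
  finally show ?thesis
    using symp_form_eq_sum[OF I, of x y] trq_neg[of "h / \<gamma> + (h / \<gamma>) ^ q"] by (simp add: I_def)
qed

lemma symp_form_zero_if_herm_zero:
  assumes "x \<in> xz_space q" "y \<in> xz_space q" "herm q (tau_xz q \<beta> x) (tau_xz q \<beta> y) = 0"
  shows "symp_form q x y = 0"
proof -
  have "0 < q" using two_le_q by simp
  then show ?thesis using symp_form_eq_trq_herm[OF assms(1,2)] assms(3) by (simp add: zero_power)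
qed

text \<open>Conversely, \<open>h \<noteq> 0\<close> would be detected by some multiple: scaling \<open>x\<close> by \<open>z \<gamma> / h\<close>
  turns the symplectic form into \<open>- tr(z + z\<^sup>q)\<close>, which is nonzero for suitable \<open>z\<close>.\<close>
lemma herm_zero_if_symp_zero:
  assumes x: "x \<in> xz_space q" and y: "y \<in> xz_space q"
    and scaled: "\<And>c. \<exists>x' \<in> xz_space q. tau_xz q \<beta> x' = (\<lambda>i. c * tau_xz q \<beta> x i) \<and> symp_form q x' y = 0"
  shows "herm q (tau_xz q \<beta> x) (tau_xz q \<beta> y) = 0"
proof (rule ccontr)
  define h where "h = herm q (tau_xz q \<beta> x) (tau_xz q \<beta> y)"
  assume "herm q (tau_xz q \<beta> x) (tau_xz q \<beta> y) \<noteq> 0"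
  then have "h \<noteq> 0" unfolding h_def .
  obtain z :: 'b where z: "trq q (z + z ^ q) \<noteq> 0" using trq_add_power_q_nonzero by blast
  obtain x' where x': "x' \<in> xz_space q" "tau_xz q \<beta> x' = (\<lambda>i. z * \<gamma> / h * tau_xz q \<beta> x i)"
    "symp_form q x' y = 0"
    using scaled by blast
  have "finite {i. tau_xz q \<beta> x i \<noteq> 0}" using supp_tau_xz[OF x] finite_xz_supp[OF x] by simp
  then have "herm q (tau_xz q \<beta> x') (tau_xz q \<beta> y) = z * \<gamma> / h * h"
    unfolding x'(2) h_def by (rule herm_scale_left)
  then have "herm q (tau_xz q \<beta> x') (tau_xz q \<beta> y) / \<gamma> = z"
    using \<open>h \<noteq> 0\<close> \<gamma>_nonzero by simp
  then show False using symp_form_eq_trq_herm[OF x'(1) y] x'(3) z by simp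
qed

end

section \<open>Convolutional stabilizer codes\<close>

locale stabilizer_code = Fq2_field q for q +
  fixes n k m :: nat and S0 :: "'b::{finite,field} pauli set"
  assumes n_pos: "0 < n" and conv_stab: "conv_stab_code q n k m S0"
begin

definition gens :: "'b pauli set" where
  "gens = {pshift (t * n) M | t M. M \<in> S0}"

lemma stab_eq: "stab q n S0 = generate (pauli_group q) gens"
  unfolding stab_def gens_def ..

lemma S0_subgroup: "subgroup S0 (pauli_win q (n + m))"
  using conv_stab unfolding conv_stab_code_def by blast

lemma S0_win: "M \<in> S0 \<Longrightarrow> M \<in> carrier (pauli_win q (n + m))"
  using subgroup.subset[OF S0_subgroup] by blast

lemma S0_carrier: "M \<in> S0 \<Longrightarrow> M \<in> carrier (pauli_group q)"
  using S0_win pauli_win_carrier_iff by blast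

lemma S0_xz_space: "M \<in> S0 \<Longrightarrow> snd M \<in> xz_space q"
  using S0_carrier pauli_group_carrier_iff by blast

lemma gens_carrier: "gens \<subseteq> carrier (pauli_group q)"
  unfolding gens_def using S0_carrier pshift_closed by blast

lemma pshift_S0_in_stab: "M \<in> S0 \<Longrightarrow> pshift (t * n) M \<in> stab q n S0"
  unfolding stab_eq gens_def by (rule generate.incl) blast

lemma S0_subset_stab: "S0 \<subseteq> stab q n S0"
  using pshift_S0_in_stab[of _ 0] by auto

lemma symp_form_shift_S0:
  assumes "M \<in> S0" "N \<in> S0"
  shows "symp_form q (xz_shift (t * n) (snd M)) (snd N) = 0"
proof (cases "t = 0")
  case True
  have "pauli_mult q M N = pauli_mult q N M" using conv_stab assms unfolding conv_stab_code_def by blast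
  then show ?thesis using True by (simp add: pauli_mult_commute_iff)
next
  case False
  have "pauli_mult q (pshift (t * n) M) N = pauli_mult q N (pshift (t * n) M)"
    using conv_stab assms False unfolding conv_stab_code_def by auto
  then show ?thesis unfolding pauli_mult_commute_iff snd_pshift .
qed

lemma symp_form_gens:
  assumes "g \<in> gens" "h \<in> gens"
  shows "symp_form q (snd g) (snd h) = 0"
proof -
  have ordered: "symp_form q (xz_shift (t * n) (snd M)) (xz_shift (t' * n) (snd N)) = 0"
    if M: "M \<in> S0" and N: "N \<in> S0" and "t' \<le> t" for M N t t'
  proof -
    have "xz_shift (t * n) (snd M) = xz_shift (t' * n) (xz_shift ((t - t') * n) (snd M))"
      using \<open>t' \<le> t\<close> by (simp add: xz_shift_add[symmetric] add_mult_distrib[symmetric])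
    moreover have "symp_form q (xz_shift (t' * n) (xz_shift ((t - t') * n) (snd M))) (xz_shift (t' * n) (snd N))
        = symp_form q (xz_shift ((t - t') * n) (snd M)) (snd N)"
      by (rule symp_form_shift[OF xz_shift_closed[OF S0_xz_space[OF M]] S0_xz_space[OF N]])
    ultimately show ?thesis using symp_form_shift_S0[OF M N] by simp
  qed
  obtain t M t' N where g: "g = pshift (t * n) M" "M \<in> S0" and h: "h = pshift (t' * n) N" "N \<in> S0"
    using assms unfolding gens_def by blast
  show ?thesis
  proof (cases "t' \<le> t")
    case True
    then show ?thesis using ordered[OF g(2) h(2)] by (simp add: g h snd_pshift)
  next
    case False
    then have "symp_form q (snd h) (snd g) = 0" using ordered[OF h(2) g(2)] by (simp add: g h snd_pshift)
    then show ?thesis using symp_form_swap[of q "snd g" "snd h"] by simp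
  qed
qed

lemma stab_carrier: "E \<in> stab q n S0 \<Longrightarrow> E \<in> carrier (pauli_group q)"
  using generate_pauli_group_induct[OF gens_carrier, of UNIV] unfolding stab_eq by blast

lemma stab_xz_space: "E \<in> stab q n S0 \<Longrightarrow> snd E \<in> xz_space q"
  using stab_carrier pauli_group_carrier_iff by blast

lemma symp_form_stab:
  assumes "E \<in> stab q n S0" "F \<in> stab q n S0"
  shows "symp_form q (snd E) (snd F) = 0"
proof -
  have gens_orth: "symp_form q (snd E') (snd h) = 0" if E': "E' \<in> stab q n S0" and h: "h \<in> gens" for E' h
  proof (rule symp_form_zero_generate[OF gens_carrier])
    show "snd h \<in> xz_space q" using gens_carrier h pauli_group_carrier_iff by blast
    show "g \<in> gens \<Longrightarrow> symp_form q (snd g) (snd h) = 0" for g using symp_form_gens h by blast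
    show "E' \<in> generate (pauli_group q) gens" using E' stab_eq by simp
  qed
  show ?thesis
  proof (rule symp_form_zero_generate[OF gens_carrier stab_xz_space[OF assms(2)]])
    show "symp_form q (snd h) (snd F) = 0" if "h \<in> gens" for h
      using gens_orth[OF assms(2) that] symp_form_swap[of q "snd F" "snd h"] by simp
    show "E \<in> generate (pauli_group q) gens" using assms(1) stab_eq by simp
  qed
qed

lemma stab_one: "(0, \<lambda>_. 0, \<lambda>_. 0) \<in> stab q n S0"
  unfolding stab_eq using generate.one[of "pauli_group q" gens] by simp

lemma stab_mult: "E \<in> stab q n S0 \<Longrightarrow> F \<in> stab q n S0 \<Longrightarrow> pauli_mult q E F \<in> stab q n S0"
  unfolding stab_eq using generate.eng[of E "pauli_group q" gens F] by simp

lemma snd_stab_closed: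
  "((\<lambda>_. 0), (\<lambda>_. 0)) \<in> snd ` stab q n S0"
  "u \<in> snd ` stab q n S0 \<Longrightarrow> v \<in> snd ` stab q n S0 \<Longrightarrow> xz_add u v \<in> snd ` stab q n S0"
  "u \<in> snd ` stab q n S0 \<Longrightarrow> xz_neg u \<in> snd ` stab q n S0"
proof -
  show "((\<lambda>_. 0), (\<lambda>_. 0)) \<in> snd ` stab q n S0" by (rule rev_image_eqI[OF stab_one]) simp
  show "xz_add u v \<in> snd ` stab q n S0" if uv: "u \<in> snd ` stab q n S0" "v \<in> snd ` stab q n S0"
  proof -
    obtain E F where "E \<in> stab q n S0" "F \<in> stab q n S0" "u = snd E" "v = snd F" using uv by blast
    then show ?thesis by (intro rev_image_eqI[OF stab_mult]) (simp_all add: snd_pauli_mult)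
  qed
  show "xz_neg u \<in> snd ` stab q n S0" if u: "u \<in> snd ` stab q n S0"
  proof -
    obtain E where "E \<in> stab q n S0" "u = snd E" using u by blast
    then obtain E' where "E' \<in> stab q n S0" "snd E' = xz_neg u"
      using generate_xz_neg[OF gens_carrier] unfolding stab_eq by blast
    then show ?thesis by (metis image_eqI)
  qed
qed

lemma stab_t_win_and_snd:
  "stab_t q n S0 t \<subseteq> carrier (pauli_win q ((t + 1) * n + m)) \<and> snd ` stab_t q n S0 t \<subseteq> snd ` stab q n S0"
proof (induction t)
  case 0
  then show ?case using S0_win S0_subset_stab by auto
next
  case (Suc t)
  define N where "N = (Suc t + 1) * n + m"
  define H where "H = stab_t q n S0 t \<union> pshift (Suc t * n) ` S0"
  have H: "H \<subseteq> carrier (pauli_group q)"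
    unfolding H_def using Suc.IH pauli_win_carrier_iff S0_carrier pshift_closed by blast
  define V where "V = {v \<in> snd ` stab q n S0. xz_supp v \<subseteq> {..<N}}"
  have "E \<in> carrier (pauli_group q) \<and> snd E \<in> V" if "E \<in> stab_t q n S0 (Suc t)" for E
  proof (rule generate_pauli_group_induct[OF H])
    show "((\<lambda>_. 0), (\<lambda>_. 0)) \<in> V" unfolding V_def using snd_stab_closed(1) by (auto simp: xz_supp_def)
    show "xz_add x y \<in> V" if "x \<in> V" "y \<in> V" for x y
      using that snd_stab_closed(2) xz_supp_add[of x y] unfolding V_def by blast
    show "xz_neg x \<in> V" if "x \<in> V" for x
      using that snd_stab_closed(3) xz_supp_neg[of x] unfolding V_def by auto
    show "snd h \<in> V" if h: "h \<in> H" for h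
    proof (cases "h \<in> stab_t q n S0 t")
      case True
      then have "xz_supp (snd h) \<subseteq> {..<(t + 1) * n + m}" using Suc.IH pauli_win_carrier_iff by blast
      moreover have "(t + 1) * n + m \<le> N" unfolding N_def by simp
      ultimately show ?thesis unfolding V_def using Suc.IH True by auto
    next
      case False
      then obtain M where M: "M \<in> S0" "h = pshift (Suc t * n) M" using h H_def by auto
      have "xz_supp (snd M) \<subseteq> {..<n + m}" using S0_win[OF M(1)] pauli_win_carrier_iff by blast
      then have "xz_supp (snd h) \<subseteq> {..<N}" unfolding M(2) snd_pshift xz_supp_shift N_def by auto
      then show ?thesis unfolding V_def using pshift_S0_in_stab[OF M(1)] M(2) by blast
    qed
    show "E \<in> generate (pauli_group q) H" using that unfolding H_def by simp
  qed
  then show ?case unfolding subset_iff image_subset_iff pauli_win_carrier_iff V_def N_def by blast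
qed

text \<open>The shifted generators vanish on the first block.\<close>
lemma stab_first_block:
  assumes "E \<in> stab q n S0"
  shows "\<exists>M\<in>S0. \<forall>i<n. fst (snd E) i = fst (snd M) i \<and> snd (snd E) i = snd (snd M) i"
proof -
  define V where "V = {x. \<exists>M\<in>S0. \<forall>i<n. fst x i = fst (snd M) i \<and> snd x i = snd (snd M) i}"
  have S0_closed: "(0, \<lambda>_. 0, \<lambda>_. 0) \<in> S0" "M \<in> S0 \<Longrightarrow> N \<in> S0 \<Longrightarrow> pauli_mult q M N \<in> S0"
    "M \<in> S0 \<Longrightarrow> pauli_inv q M \<in> S0" for M N
    using subgroup.one_closed[OF S0_subgroup] subgroup.m_closed[OF S0_subgroup, of M N]
      subgroup.m_inv_closed[OF S0_subgroup, of M] m_inv_pauli_win S0_win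
    by auto
  have "snd E \<in> V"
  proof (rule conjunct2[OF generate_pauli_group_induct[OF gens_carrier, of V]])
    show "((\<lambda>_. 0), (\<lambda>_. 0)) \<in> V" unfolding V_def using S0_closed(1) by force
    show "xz_add x y \<in> V" if xy: "x \<in> V" "y \<in> V" for x y
    proof -
      obtain M N where "M \<in> S0" "N \<in> S0" "\<forall>i<n. fst x i = fst (snd M) i \<and> snd x i = snd (snd M) i"
        "\<forall>i<n. fst y i = fst (snd N) i \<and> snd y i = snd (snd N) i" using xy unfolding V_def by blast
      then show ?thesis unfolding V_def using S0_closed(2)
        by (intro CollectI bexI[of _ "pauli_mult q M N"]) (auto simp: snd_pauli_mult xz_add_def)
    qed
    show "xz_neg x \<in> V" if x: "x \<in> V" for x
    proof -
      obtain M where "M \<in> S0" "\<forall>i<n. fst x i = fst (snd M) i \<and> snd x i = snd (snd M) i"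
        using x unfolding V_def by blast
      then show ?thesis unfolding V_def using S0_closed(3)
        by (intro CollectI bexI[of _ "pauli_inv q M"]) (auto simp: snd_pauli_inv xz_neg_def)
    qed
    show "snd h \<in> V" if h: "h \<in> gens" for h
    proof -
      obtain t M where M: "M \<in> S0" "h = pshift (t * n) M" using h unfolding gens_def by blast
      show ?thesis
      proof (cases "t = 0")
        case True
        then show ?thesis unfolding V_def M using M(1) by auto
      next
        case False
        then have "n \<le> t * n" by simp
        then have "\<not> t * n \<le> i" if "i < n" for i using that by linarith
        then show ?thesis unfolding V_def M snd_pshift xz_shift_def seq_shift_def using S0_closed(1)
          by (intro CollectI bexI[of _ "(0, \<lambda>_. 0, \<lambda>_. 0)"]) auto
      qed
    qed
    show "E \<in> generate (pauli_group q) gens" using assms stab_eq by simp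
  qed
  then show ?thesis unfolding V_def by blast
qed

lemma card_snd_stab_t: "card (snd ` stab_t q n S0 t) = q ^ ((t + 1) * (n - k))"
  using conv_stab card_center_cosets stab_t_win_and_snd unfolding conv_stab_code_def by metis

lemma card_snd_S0: "card (snd ` S0) = q ^ (n - k)"
  using card_snd_stab_t[of 0] by simp

end

section \<open>Truncated convolutional codes\<close>

definition seq_trunc :: "nat \<Rightarrow> (nat \<Rightarrow> 'a::zero) \<Rightarrow> nat \<Rightarrow> 'a" where
  "seq_trunc L v = (\<lambda>i. if i < L then v i else 0)"

lemma coeff_mult_mat_vec_low:
  fixes M :: "'a::comm_ring_1 poly mat"
  assumes M: "M \<in> carrier_mat r c" and w: "w \<in> carrier_vec c" and w': "w' \<in> carrier_vec c"
    and agree: "\<And>j e. j < c \<Longrightarrow> e < d \<Longrightarrow> coeff (w $ j) e = coeff (w' $ j) e"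
    and "i < r" "e < d"
  shows "coeff ((M *\<^sub>v w) $ i) e = coeff ((M *\<^sub>v w') $ i) e"
proof -
  have entry: "(M *\<^sub>v x) $ i = (\<Sum>j\<in>{0..<c}. M $$ (i, j) * x $ j)" if "x \<in> carrier_vec c" for x
    using M that \<open>i < r\<close> by (simp add: scalar_prod_def)
  show ?thesis unfolding entry[OF w] entry[OF w'] coeff_sum coeff_mult
    by (intro sum.cong refl) (use agree \<open>e < d\<close> in auto)
qed

lemma sigma_coeff: "0 < n \<Longrightarrow> r < n \<Longrightarrow> sigma n w (e * n + r) = coeff (w $ r) e"
  unfolding sigma_def by simp

lemma sigma_low:
  assumes "0 < n" and "\<And>j e. j < n \<Longrightarrow> e < d \<Longrightarrow> coeff (w $ j) e = coeff (w' $ j) e"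
    and "j < d * n"
  shows "sigma n w j = sigma n w' j"
proof -
  have "j div n < d" using assms(1,3) by (simp add: div_less_iff_less_mult)
  then show ?thesis unfolding sigma_def using assms(1,2) by simp
qed

lemma sigma_surj:
  assumes n: "0 < n" and fin: "finite {i. v i \<noteq> 0}"
  shows "\<exists>w\<in>carrier_vec n. sigma n w = (v :: nat \<Rightarrow> 'a::zero)"
proof -
  obtain B where B: "{i. v i \<noteq> 0} \<subseteq> {..<B}" using finite_nat_bounded[OF fin] by blast
  define w where "w = vec n (\<lambda>r. Poly (map (\<lambda>e. v (e * n + r)) [0..<B]))"
  have "sigma n w j = v j" for j
  proof (cases "j div n < B")
    case False
    then have "B \<le> j" using div_le_dividend[of j n] by linarith
    then have "v j = 0" using B by auto
    then show ?thesis using False n unfolding sigma_def w_def by (simp add: nth_default_def)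
  qed (use n in \<open>simp add: sigma_def w_def nth_default_def\<close>)
  then show ?thesis unfolding w_def by (intro bexI[of _ w]) (auto simp: w_def fun_eq_iff)
qed

lemma sigma_image_preimage:
  assumes "0 < n" "T \<subseteq> Gamma (\<lambda>_. True)"
  shows "sigma n ` {u \<in> carrier_vec n. sigma n u \<in> T} = T"
proof
  show "T \<subseteq> sigma n ` {u \<in> carrier_vec n. sigma n u \<in> T}"
  proof
    fix v assume "v \<in> T"
    then have "finite {i. v i \<noteq> 0}" using assms(2) unfolding Gamma_def by blast
    then obtain w where "w \<in> carrier_vec n" "sigma n w = v" using sigma_surj[OF assms(1)] by blast
    then show "v \<in> sigma n ` {u \<in> carrier_vec n. sigma n u \<in> T}" using \<open>v \<in> T\<close> by blast
  qed
qed blast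

text \<open>The first \<open>d\<close> blocks of a codeword are determined by the first \<open>d\<close> coefficients of the
  message, so they take at most \<open>|F|\<^bsup>d k'\<^esup>\<close> values.\<close>
lemma card_trunc_conv_code_le:
  fixes G :: "'a::{finite,field} poly mat"
  assumes G: "G \<in> carrier_mat k' n" and n: "0 < n"
  defines "T \<equiv> sigma n ` {transpose_mat G *\<^sub>v u | u. u \<in> carrier_vec k'}"
  shows "finite (seq_trunc (d * n) ` T)" and "card (seq_trunc (d * n) ` T) \<le> (card (UNIV :: 'a set) ^ d) ^ k'"
proof -
  define Fd where "Fd = ({..<k'} \<rightarrow>\<^sub>E ({..<d} \<rightarrow>\<^sub>E (UNIV :: 'a set)))"
  define msg where "msg f = vec k' (\<lambda>i. Poly (map (f i) [0..<d]))" for f :: "nat \<Rightarrow> nat \<Rightarrow> 'a"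
  define \<psi> where "\<psi> f = seq_trunc (d * n) (sigma n (transpose_mat G *\<^sub>v msg f))" for f
  have "seq_trunc (d * n) ` T \<subseteq> \<psi> ` Fd"
  proof
    fix y assume "y \<in> seq_trunc (d * n) ` T"
    then obtain u where u: "u \<in> carrier_vec k'" "y = seq_trunc (d * n) (sigma n (transpose_mat G *\<^sub>v u))"
      unfolding T_def by blast
    define f where "f = restrict (\<lambda>i. restrict (\<lambda>e. coeff (u $ i) e) {..<d}) {..<k'}"
    have "f \<in> Fd" unfolding Fd_def f_def by auto
    have "coeff (u $ i) e = coeff (msg f $ i) e" if "i < k'" "e < d" for i e
      unfolding msg_def f_def using that by (simp add: nth_default_def)
    then have "coeff ((transpose_mat G *\<^sub>v u) $ j) e = coeff ((transpose_mat G *\<^sub>v msg f) $ j) e"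
      if "j < n" "e < d" for j e
      using G u(1) that by (intro coeff_mult_mat_vec_low[of _ n k']) (auto simp: msg_def)
    then have "sigma n (transpose_mat G *\<^sub>v u) j = sigma n (transpose_mat G *\<^sub>v msg f) j" if "j < d * n" for j
      using n that by (intro sigma_low) auto
    then have "y = \<psi> f" unfolding u(2) \<psi>_def seq_trunc_def by auto
    then show "y \<in> \<psi> ` Fd" using \<open>f \<in> Fd\<close> by blast
  qed
  moreover have "finite Fd" "card Fd = (card (UNIV :: 'a set) ^ d) ^ k'"
    unfolding Fd_def by (simp_all add: finite_PiE card_PiE)
  ultimately show "finite (seq_trunc (d * n) ` T)"
    using finite_subset by blast
  have "card (seq_trunc (d * n) ` T) \<le> card (\<psi> ` Fd)"
    using \<open>seq_trunc (d * n) ` T \<subseteq> \<psi> ` Fd\<close> \<open>finite Fd\<close> by (intro card_mono) auto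
  also have "\<dots> \<le> card Fd" using \<open>finite Fd\<close> by (rule card_image_le)
  finally show "card (seq_trunc (d * n) ` T) \<le> (card (UNIV :: 'a set) ^ d) ^ k'"
    using \<open>card Fd = _\<close> by simp
qed

text \<open>Conversely, a left inverse \<open>H\<^sup>T\<close> of \<open>G\<^sup>T\<close> recovers constant messages from the first
  block, so at least \<open>|F|\<^bsup>k'\<^esup>\<close> first blocks occur.\<close>
lemma card_trunc_conv_code_ge:
  fixes G H :: "'a::{finite,field} poly mat"
  assumes G: "G \<in> carrier_mat k' n" and H: "H \<in> carrier_mat n k'" and GH: "G * H = 1\<^sub>m k'"
    and n: "0 < n"
  defines "T \<equiv> sigma n ` {transpose_mat G *\<^sub>v u | u. u \<in> carrier_vec k'}"
  shows "card (UNIV :: 'a set) ^ k' \<le> card (seq_trunc n ` T)"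
proof -
  have left_inv: "transpose_mat H *\<^sub>v (transpose_mat G *\<^sub>v u) = u" if "u \<in> carrier_vec k'" for u
  proof -
    have "transpose_mat H * transpose_mat G = 1\<^sub>m k'" using transpose_mult[OF G H] GH by simp
    then show ?thesis
      using assoc_mult_mat_vec[of "transpose_mat H" k' n "transpose_mat G" k' u] G H that by simp
  qed
  define F1 where "F1 = ({..<k'} \<rightarrow>\<^sub>E (UNIV :: 'a set))"
  define msg where "msg f = vec k' (\<lambda>i. [:f i:])" for f :: "nat \<Rightarrow> 'a"
  define \<phi> where "\<phi> f = seq_trunc n (sigma n (transpose_mat G *\<^sub>v msg f))" for f
  have msg: "msg f \<in> carrier_vec k'" for f unfolding msg_def by simp
  have "inj_on \<phi> F1"
  proof (rule inj_onI)
    fix f f' assume f: "f \<in> F1" and f': "f' \<in> F1" and eq: "\<phi> f = \<phi> f'"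
    have first_block: "coeff ((transpose_mat G *\<^sub>v msg f) $ j) 0 = coeff ((transpose_mat G *\<^sub>v msg f') $ j) 0"
      if "j < n" for j
    proof -
      have "sigma n (transpose_mat G *\<^sub>v msg f) j = sigma n (transpose_mat G *\<^sub>v msg f') j"
        using fun_cong[OF eq, of j] that unfolding \<phi>_def seq_trunc_def by simp
      then show ?thesis using sigma_coeff[OF n that, of "transpose_mat G *\<^sub>v msg f" 0]
        sigma_coeff[OF n that, of "transpose_mat G *\<^sub>v msg f'" 0] by simp
    qed
    have "coeff ((transpose_mat H *\<^sub>v (transpose_mat G *\<^sub>v msg f)) $ i) 0
        = coeff ((transpose_mat H *\<^sub>v (transpose_mat G *\<^sub>v msg f')) $ i) 0" if "i < k'" for i
      by (rule coeff_mult_mat_vec_low[of _ k' n _ _ 1]) (use G H msg that first_block in auto)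
    then have "f i = f' i" if "i < k'" for i
      using that unfolding left_inv[OF msg] by (simp add: msg_def)
    then show "f = f'" using f f' unfolding F1_def by (auto intro: PiE_ext)
  qed
  then have "card (UNIV :: 'a set) ^ k' = card (\<phi> ` F1)"
    unfolding F1_def by (simp add: card_image card_PiE)
  also have "\<dots> \<le> card (seq_trunc n ` T)"
    using card_trunc_conv_code_le(1)[OF G n, of 1] msg
    by (intro card_mono) (auto simp: \<phi>_def T_def)
  finally show ?thesis .
qed

section \<open>The associated Hermitian self-orthogonal code\<close>

lemma eq_if_affine_bound:
  fixes N K m :: nat
  assumes "K \<le> N" and bound: "\<And>t. (t + 1) * N \<le> K * (t + 1 + m)"
  shows "N = K"
proof (rule ccontr)
  assume "N \<noteq> K"
  then have "K + 1 \<le> N" using assms(1) by simp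
  then have "(K * m + 1) * (K + 1) \<le> (K * m + 1) * N" by (rule mult_le_mono2)
  also have "\<dots> \<le> K * (K * m + 1 + m)" using bound[of "K * m"] by simp
  finally show False by (simp add: algebra_simps)
qed

locale linear_stabilizer_code = normal_basis_field q \<beta> + stabilizer_code q n k m S0
  for q and \<beta> :: "'b::{finite,field}" and n k m and S0 :: "'b pauli set" +
  assumes Fq2_linear: "is_Fq2_space (tau q \<beta> ` stab q n S0)"
begin

lemma tau_stab_Gamma: "tau q \<beta> ` stab q n S0 \<subseteq> Gamma (\<lambda>_. True)"
  using Fq2_linear unfolding is_Fq2_space_def by blast

lemma herm_tau_stab:
  assumes E: "E \<in> stab q n S0" and y: "y \<in> xz_space q"
    and orth: "\<And>F. F \<in> stab q n S0 \<Longrightarrow> symp_form q (snd F) y = 0"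
  shows "herm q (tau q \<beta> E) (tau_xz q \<beta> y) = 0"
  unfolding tau_eq_tau_xz
proof (rule herm_zero_if_symp_zero[OF stab_xz_space[OF E] y])
  fix c
  have "(\<lambda>i. c * tau q \<beta> E i) \<in> tau q \<beta> ` stab q n S0"
    using Fq2_linear E unfolding is_Fq2_space_def by blast
  then obtain F where "F \<in> stab q n S0" "tau q \<beta> F = (\<lambda>i. c * tau q \<beta> E i)" by auto
  then show "\<exists>x'\<in>xz_space q. tau_xz q \<beta> x' = (\<lambda>i. c * tau_xz q \<beta> (snd E) i) \<and> symp_form q x' y = 0"
    using stab_xz_space orth unfolding tau_eq_tau_xz by blast
qed

lemma finite_supp_tau: "E \<in> carrier (pauli_group q) \<Longrightarrow> finite {i. tau q \<beta> E i \<noteq> 0}"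
  unfolding tau_eq_tau_xz using supp_tau_xz finite_xz_supp pauli_group_carrier_iff by metis

lemma pauli_wt_eq_seq_wt_tau: "E \<in> carrier (pauli_group q) \<Longrightarrow> pauli_wt E = seq_wt (tau q \<beta> E)"
  unfolding pauli_wt_def seq_wt_def tau_eq_tau_xz
  by (simp add: supp_tau_xz pauli_group_carrier_iff pauli_supp_def xz_supp_def)

lemma tau_stab_self_orthogonal: "tau q \<beta> ` stab q n S0 \<subseteq> herm_dual q (tau q \<beta> ` stab q n S0)"
proof
  fix v assume "v \<in> tau q \<beta> ` stab q n S0"
  then obtain F where F: "F \<in> stab q n S0" "v = tau q \<beta> F" by auto
  have "herm q u v = 0" if "u \<in> tau q \<beta> ` stab q n S0" for u
    using that F symp_form_stab stab_xz_space herm_tau_stab unfolding tau_eq_tau_xz[of _ _ F] by blast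
  then show "v \<in> herm_dual q (tau q \<beta> ` stab q n S0)"
    unfolding herm_dual_def using tau_stab_Gamma \<open>v \<in> tau q \<beta> ` stab q n S0\<close> by blast
qed

definition nontrivial_logicals :: "'b pauli set" where
  "nontrivial_logicals =
     {E \<in> carrier (pauli_group q). \<forall>F \<in> stab q n S0. pauli_mult q E F = pauli_mult q F E}
     - {pauli_mult q Z F | Z F. Z \<in> center_of (pauli_group q) \<and> F \<in> stab q n S0}"

lemma free_distance_iff:
  "free_distance q n S0 d \<longleftrightarrow> d \<in> pauli_wt ` nontrivial_logicals \<and> (\<forall>E \<in> nontrivial_logicals. d \<le> pauli_wt E)"
  unfolding free_distance_def nontrivial_logicals_def Let_def by simp

lemma tau_nontrivial_logical:
  assumes "E \<in> nontrivial_logicals"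
  shows "tau q \<beta> E \<in> herm_dual q (tau q \<beta> ` stab q n S0) - tau q \<beta> ` stab q n S0"
proof -
  have E: "E \<in> carrier (pauli_group q)" "\<And>F. F \<in> stab q n S0 \<Longrightarrow> pauli_mult q E F = pauli_mult q F E"
    and not_ZS: "\<And>Z F. Z \<in> center_of (pauli_group q) \<Longrightarrow> F \<in> stab q n S0 \<Longrightarrow> E \<noteq> pauli_mult q Z F"
    using assms unfolding nontrivial_logicals_def by blast+
  have xz: "snd E \<in> xz_space q" using E(1) pauli_group_carrier_iff by blast
  have "herm q u (tau q \<beta> E) = 0" if u: "u \<in> tau q \<beta> ` stab q n S0" for u
  proof -
    obtain F where F: "F \<in> stab q n S0" "u = tau q \<beta> F" using u by blast
    have "symp_form q (snd F') (snd E) = 0" if "F' \<in> stab q n S0" for F'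
      using E(2)[OF that] pauli_mult_commute_iff[of q F' E] by simp
    then show ?thesis unfolding F(2) tau_eq_tau_xz[of _ _ E] by (rule herm_tau_stab[OF F(1) xz])
  qed
  moreover have "tau q \<beta> E \<notin> tau q \<beta> ` stab q n S0"
  proof
    assume "tau q \<beta> E \<in> tau q \<beta> ` stab q n S0"
    then obtain F where F: "F \<in> stab q n S0" "tau q \<beta> E = tau q \<beta> F" by auto
    then have "snd E = snd F" using tau_xz_inj[OF xz stab_xz_space[OF F(1)]] unfolding tau_eq_tau_xz by simp
    moreover have "fst E - fst F \<in> Fp"
      using E(1) stab_carrier[OF F(1)] unfolding pauli_group_carrier_iff by simp
    ultimately have "E = pauli_mult q (fst E - fst F, \<lambda>_. 0, \<lambda>_. 0) F"
      by (cases E; cases F) (simp add: pauli_mult_Pair)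
    moreover have "(fst E - fst F, \<lambda>_. 0, \<lambda>_. 0) \<in> center_of (pauli_group q)"
      using \<open>fst E - fst F \<in> Fp\<close> center_pauli_group by blast
    ultimately show False using not_ZS F(1) by blast
  qed
  ultimately show ?thesis
    unfolding herm_dual_def Gamma_def using finite_supp_tau[OF E(1)] by blast
qed

lemma nontrivial_logical_of_dual:
  assumes "v \<in> herm_dual q (tau q \<beta> ` stab q n S0) - tau q \<beta> ` stab q n S0"
  shows "\<exists>E \<in> nontrivial_logicals. tau q \<beta> E = v"
proof -
  have fin: "finite {i. v i \<noteq> 0}" and orth: "\<And>u. u \<in> tau q \<beta> ` stab q n S0 \<Longrightarrow> herm q u v = 0"
    and not_T: "v \<notin> tau q \<beta> ` stab q n S0"
    using assms unfolding herm_dual_def Gamma_def by auto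
  have "\<forall>i. \<exists>p. fst p \<in> Fq q \<and> snd p \<in> Fq q \<and> v i = \<beta> * fst p + \<beta> ^ q * snd p"
    using normal_basis_coords_exist by fastforce
  from choice[OF this] obtain p where p: "\<forall>i. fst (p i) \<in> Fq q \<and> snd (p i) \<in> Fq q \<and> v i = \<beta> * fst (p i) + \<beta> ^ q * snd (p i)"
    by blast
  define a where "a i = fst (p i)" for i
  define b where "b i = snd (p i)" for i
  have ab: "a i \<in> Fq q \<and> b i \<in> Fq q \<and> v i = \<beta> * a i + \<beta> ^ q * b i" for i
    using p unfolding a_def b_def by blast
  have "{i. a i \<noteq> 0 \<or> b i \<noteq> 0} \<subseteq> {i. v i \<noteq> 0}" using ab normal_basis_coords_zero by auto
  then have ab_xz: "(a, b) \<in> xz_space q" unfolding xz_space_def using ab finite_subset[OF _ fin] by auto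
  have tau_ab: "tau_xz q \<beta> (a, b) = v" unfolding tau_xz_def using ab by (simp add: fun_eq_iff)
  define E where "E = (0 :: 'b, a, b)"
  have E: "E \<in> carrier (pauli_group q)" unfolding E_def pauli_group_carrier_iff using ab_xz by simp
  have "pauli_mult q E F = pauli_mult q F E" if F: "F \<in> stab q n S0" for F
  proof -
    have "herm q (tau_xz q \<beta> (snd F)) (tau_xz q \<beta> (a, b)) = 0"
      using orth[of "tau q \<beta> F"] F tau_ab unfolding tau_eq_tau_xz by auto
    then have "symp_form q (snd F) (a, b) = 0" by (rule symp_form_zero_if_herm_zero[OF stab_xz_space[OF F] ab_xz])
    then show ?thesis using pauli_mult_commute_iff[of q F E] symp_form_swap unfolding E_def by simp
  qed
  moreover have "E \<noteq> pauli_mult q Z F" if "Z \<in> center_of (pauli_group q)" "F \<in> stab q n S0" for Z F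
  proof
    assume "E = pauli_mult q Z F"
    moreover have "snd Z = (\<lambda>_. 0, \<lambda>_. 0)" using that(1) center_pauli_group by auto
    ultimately have "snd E = snd F" by (simp add: snd_pauli_mult xz_add_def)
    then have "v = tau q \<beta> F" unfolding tau_eq_tau_xz using tau_ab E_def by simp
    then show False using not_T that(2) by blast
  qed
  ultimately have "E \<in> nontrivial_logicals" unfolding nontrivial_logicals_def using E by blast
  moreover have "tau q \<beta> E = v" unfolding tau_eq_tau_xz E_def using tau_ab by simp
  ultimately show ?thesis by blast
qed

lemma free_distance_tau:
  assumes "free_distance q n S0 d"
  shows "d \<in> seq_wt ` (herm_dual q (tau q \<beta> ` stab q n S0) - tau q \<beta> ` stab q n S0)"
    and "\<forall>v \<in> herm_dual q (tau q \<beta> ` stab q n S0) - tau q \<beta> ` stab q n S0. d \<le> seq_wt v"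
proof -
  have wt: "pauli_wt E = seq_wt (tau q \<beta> E)" if "E \<in> nontrivial_logicals" for E
    using that pauli_wt_eq_seq_wt_tau unfolding nontrivial_logicals_def by blast
  obtain E where "E \<in> nontrivial_logicals" "d = pauli_wt E" using assms free_distance_iff by blast
  then show "d \<in> seq_wt ` (herm_dual q (tau q \<beta> ` stab q n S0) - tau q \<beta> ` stab q n S0)"
    using tau_nontrivial_logical wt by auto
  show "\<forall>v \<in> herm_dual q (tau q \<beta> ` stab q n S0) - tau q \<beta> ` stab q n S0. d \<le> seq_wt v"
  proof
    fix v assume "v \<in> herm_dual q (tau q \<beta> ` stab q n S0) - tau q \<beta> ` stab q n S0"
    then obtain E where "E \<in> nontrivial_logicals" "tau q \<beta> E = v" using nontrivial_logical_of_dual by blast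
    then show "d \<le> seq_wt v" using assms wt unfolding free_distance_iff by auto
  qed
qed

lemma rank_le:
  assumes G: "G \<in> carrier_mat k' n" and H: "H \<in> carrier_mat n k'" and GH: "G * H = 1\<^sub>m k'"
    and code: "sigma n ` {transpose_mat G *\<^sub>v u | u. u \<in> carrier_vec k'} = tau q \<beta> ` stab q n S0"
  shows "2 * k' \<le> n - k"
proof -
  define first_blocks where "first_blocks = (\<lambda>x. seq_trunc n (tau_xz q \<beta> x)) ` snd ` S0"
  have "finite (snd ` S0)"
  proof (rule ccontr)
    assume "infinite (snd ` S0)"
    then show False using card_snd_S0 one_less_q by simp
  qed
  have "seq_trunc n ` tau q \<beta> ` stab q n S0 \<subseteq> first_blocks"
  proof
    fix y assume "y \<in> seq_trunc n ` tau q \<beta> ` stab q n S0"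
    then obtain E where E: "E \<in> stab q n S0" "y = seq_trunc n (tau q \<beta> E)" by blast
    obtain M where "M \<in> S0" "\<forall>i<n. fst (snd E) i = fst (snd M) i \<and> snd (snd E) i = snd (snd M) i"
      using stab_first_block[OF E(1)] by blast
    moreover from this have "y = seq_trunc n (tau_xz q \<beta> (snd M))"
      unfolding E(2) tau_eq_tau_xz seq_trunc_def tau_xz_def by (simp add: fun_eq_iff)
    ultimately show "y \<in> first_blocks" unfolding first_blocks_def by blast
  qed
  then have "card (seq_trunc n ` tau q \<beta> ` stab q n S0) \<le> card first_blocks"
    using \<open>finite (snd ` S0)\<close> unfolding first_blocks_def by (intro card_mono) auto
  then have "q ^ (2 * k') \<le> card first_blocks"
    using card_trunc_conv_code_ge[OF G H GH n_pos] code card_UNIV_power by simp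
  also have "\<dots> \<le> q ^ (n - k)"
    unfolding first_blocks_def card_snd_S0[symmetric] using \<open>finite (snd ` S0)\<close> by (rule card_image_le)
  finally show ?thesis using power_le_imp_le_exp[OF one_less_q] by blast
qed

lemma rank_growth_bound:
  assumes G: "G \<in> carrier_mat k' n"
    and code: "sigma n ` {transpose_mat G *\<^sub>v u | u. u \<in> carrier_vec k'} = tau q \<beta> ` stab q n S0"
  shows "(t + 1) * (n - k) \<le> 2 * k' * (t + 1 + m)"
proof -
  define d where "d = t + 1 + m"
  define Y where "Y = tau_xz q \<beta> ` snd ` stab_t q n S0 t"
  have win: "stab_t q n S0 t \<subseteq> carrier (pauli_win q ((t + 1) * n + m))"
    and snd_stab: "snd ` stab_t q n S0 t \<subseteq> snd ` stab q n S0"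
    using stab_t_win_and_snd by blast+
  have xz: "snd E \<in> xz_space q \<and> xz_supp (snd E) \<subseteq> {..<(t + 1) * n + m}"
    if "E \<in> stab_t q n S0 t" for E
  proof -
    have "E \<in> carrier (pauli_win q ((t + 1) * n + m))" using win that by blast
    then show ?thesis unfolding pauli_win_carrier_iff pauli_group_carrier_iff by blast
  qed
  have "(t + 1) * n + m \<le> d * n" unfolding d_def using n_pos by (simp add: algebra_simps)
  have "Y \<subseteq> seq_trunc (d * n) ` tau q \<beta> ` stab q n S0"
  proof
    fix y assume "y \<in> Y"
    then obtain E where E: "E \<in> stab_t q n S0 t" "y = tau_xz q \<beta> (snd E)" unfolding Y_def by blast
    then have "{i. y i \<noteq> 0} = xz_supp (snd E)" using supp_tau_xz[of "snd E"] xz[OF E(1)] by simp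
    then have "{i. y i \<noteq> 0} \<subseteq> {..<d * n}"
      using xz[OF E(1)] \<open>(t + 1) * n + m \<le> d * n\<close> by auto
    then have "seq_trunc (d * n) y = y" unfolding seq_trunc_def by (auto simp: fun_eq_iff)
    moreover have "snd E \<in> snd ` stab q n S0" using snd_stab imageI[OF E(1), of snd] by (rule subsetD)
    then obtain F where "F \<in> stab q n S0" "snd E = snd F" by (rule imageE)
    then have "y = tau q \<beta> F" "F \<in> stab q n S0" unfolding E(2) tau_eq_tau_xz by simp_all
    ultimately show "y \<in> seq_trunc (d * n) ` tau q \<beta> ` stab q n S0" by (metis image_eqI)
  qed
  have "inj_on (tau_xz q \<beta>) (snd ` stab_t q n S0 t)"
  proof (rule inj_onI)
    fix x y assume "x \<in> snd ` stab_t q n S0 t" "y \<in> snd ` stab_t q n S0 t" and eq: "tau_xz q \<beta> x = tau_xz q \<beta> y"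
    then obtain E E' where "E \<in> stab_t q n S0 t" "x = snd E" "E' \<in> stab_t q n S0 t" "y = snd E'" by blast
    then show "x = y" using tau_xz_inj[OF _ _ eq] xz by simp
  qed
  then have "q ^ ((t + 1) * (n - k)) = card Y"
    unfolding Y_def by (simp add: card_image card_snd_stab_t)
  also have "\<dots> \<le> card (seq_trunc (d * n) ` tau q \<beta> ` stab q n S0)"
    using \<open>Y \<subseteq> _\<close> card_trunc_conv_code_le(1)[OF G n_pos, of d] code by (intro card_mono) auto
  also have "\<dots> \<le> q ^ (2 * k' * d)"
    using card_trunc_conv_code_le(2)[OF G n_pos, of d] code card_UNIV_power
    by (simp add: power_mult[symmetric] mult.commute mult.left_commute)
  finally show ?thesis unfolding d_def using power_le_imp_le_exp[OF one_less_q] by blast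
qed

lemma rank_eq:
  assumes "G \<in> carrier_mat k' n" "H \<in> carrier_mat n k'" "G * H = 1\<^sub>m k'"
    and "sigma n ` {transpose_mat G *\<^sub>v u | u. u \<in> carrier_vec k'} = tau q \<beta> ` stab q n S0"
  shows "n - k = 2 * k'"
  using rank_le[OF assms] rank_growth_bound[OF assms(1,4)] by (intro eq_if_affine_bound) auto

end

theorem mainTheorem3:
  fixes q n k m \<delta> d\<^sub>f :: nat and \<beta> :: "'b::{finite,field}" and S0 :: "'b pauli set"
  assumes "card (UNIV :: 'b set) = q ^ 2"
    and "0 < n" and "k \<le> n"
    and "normal_basis q \<beta>"
    and "conv_stab_code q n k m S0"
    and "is_Fq2_space (tau q \<beta> ` stab q n S0)"
    and "\<exists>k'. conv_code n k' \<delta> {u \<in> carrier_vec n. sigma n u \<in> tau q \<beta> ` stab q n S0}"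
    and "free_distance q n S0 d\<^sub>f"
  shows "\<exists>k' (C :: 'b poly vec set). n - k = 2 * k' \<and> conv_code n k' \<delta> C \<and>
           sigma n ` C \<subseteq> herm_dual q (sigma n ` C) \<and>
           d\<^sub>f \<in> seq_wt ` (herm_dual q (sigma n ` C) - sigma n ` C) \<and>
           (\<forall>v \<in> herm_dual q (sigma n ` C) - sigma n ` C. d\<^sub>f \<le> seq_wt v)"
proof -
  interpret linear_stabilizer_code q \<beta> n k m S0
    by unfold_locales (use assms in auto)
  define C where "C = {u \<in> carrier_vec n. sigma n u \<in> tau q \<beta> ` stab q n S0}"
  obtain k' where code: "conv_code n k' \<delta> C" using assms(7) unfolding C_def by blast
  then obtain G H where G: "G \<in> carrier_mat k' n" "H \<in> carrier_mat n k'" "G * H = 1\<^sub>m k'"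
    and C_eq: "C = {transpose_mat G *\<^sub>v u | u. u \<in> carrier_vec k'}"
    unfolding conv_code_def by blast
  have sigma_C: "sigma n ` C = tau q \<beta> ` stab q n S0"
    unfolding C_def by (rule sigma_image_preimage[OF n_pos tau_stab_Gamma])
  show ?thesis
  proof (intro exI[of _ k'] exI[of _ C] conjI)
    show "n - k = 2 * k'" by (rule rank_eq[OF G]) (use sigma_C C_eq in simp)
    show "conv_code n k' \<delta> C" by (rule code)
    show "sigma n ` C \<subseteq> herm_dual q (sigma n ` C)"
      unfolding sigma_C by (rule tau_stab_self_orthogonal)
    show "d\<^sub>f \<in> seq_wt ` (herm_dual q (sigma n ` C) - sigma n ` C)"
      "\<forall>v \<in> herm_dual q (sigma n ` C) - sigma n ` C. d\<^sub>f \<le> seq_wt v"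
      unfolding sigma_C using free_distance_tau[OF assms(8)] by blast+
  qed
qed

end
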